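(* Let $G$ be a $2$-connected near triangulation with outer cycle $C$ such that $V(G)\setminus V(C)\neq\emptyset$ and there is no vertex $v\in V(G)\setminus V(C)$ such that $v,u,w$ bound a face (facial triangle) for some edge $uw\in E(C)$. Let $S=\{v\in V(C): v \text{ has a neighbor in } V(G)\setminus V(C)\}$. Then: (i) $|S|\ge 3$; (ii) $G$ has at least three vertices of degree two lying in $V(C)$, and if $G$ has exactly three vertices of degree two in $V(C)$, then $|S|=3$ and $T=G[S]$ is a triangle such that all vertices of $V(G)\setminus V(C)$ lie in the interior of the closed disc bounded by $T$.
   Context: A near triangulation is a plane graph in which every face except possibly the outer face is bounded by a triangle; when $2$-connected, its outer face is bounded by a cycle, the outer cycle. $G[S]$ denotes the subgraph induced by $S$. *)

theory Defs
  imports Main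
begin

text \<open>Combinatorial model of a 2-connected near triangulation (a simple plane graph
whose bounded faces are all triangles and whose outer face is bounded by a cycle),
i.e. a triangulated closed disc.  The graph is given by a vertex set V, an edge set E
(2-element vertex sets) and the set F of bounded (inner) faces, each given by its
3-element vertex set.\<close>

definition adj_rel :: "'a set \<Rightarrow> 'a set set \<Rightarrow> ('a \<times> 'a) set" where
  "adj_rel W D = {(x, y). x \<in> W \<and> y \<in> W \<and> {x, y} \<in> D}"

definition graph_connected :: "'a set \<Rightarrow> 'a set set \<Rightarrow> bool" where
  "graph_connected W D \<longleftrightarrow> (\<forall>x\<in>W. \<forall>y\<in>W. (x, y) \<in> (adj_rel W D)\<^sup>*)"

definition gdeg :: "'a set set \<Rightarrow> 'a \<Rightarrow> nat" where
  "gdeg D v = card {u. {v, u} \<in> D}"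

definition simple_graph :: "'a set \<Rightarrow> 'a set set \<Rightarrow> bool" where
  "simple_graph W D \<longleftrightarrow> finite W \<and> (\<forall>e\<in>D. e \<subseteq> W \<and> card e = 2)"

definition is_cycle_graph :: "'a set \<Rightarrow> 'a set set \<Rightarrow> bool" where
  "is_cycle_graph W D \<longleftrightarrow> simple_graph W D \<and> card W \<ge> 3 \<and> graph_connected W D
     \<and> (\<forall>v\<in>W. gdeg D v = 2)"

definition is_path_graph :: "'a set \<Rightarrow> 'a set set \<Rightarrow> bool" where
  "is_path_graph W D \<longleftrightarrow> simple_graph W D \<and> card W \<ge> 2 \<and> graph_connected W D
     \<and> card D = card W - 1 \<and> (\<forall>v\<in>W. gdeg D v \<le> 2)"

text \<open>Edges lying on exactly one inner face: the edges of the outer cycle.\<close>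
definition outer_edges :: "'a set set \<Rightarrow> 'a set set \<Rightarrow> 'a set set" where
  "outer_edges E F = {e\<in>E. card {f\<in>F. e \<subseteq> f} = 1}"

definition outer_vertices :: "'a set set \<Rightarrow> 'a set set \<Rightarrow> 'a set" where
  "outer_vertices E F = \<Union> (outer_edges E F)"

definition link_vertices :: "'a set set \<Rightarrow> 'a \<Rightarrow> 'a set" where
  "link_vertices E v = {u. {v, u} \<in> E}"

definition link_edges :: "'a set set \<Rightarrow> 'a \<Rightarrow> 'a set set" where
  "link_edges F v = {{u, w} | u w. u \<noteq> v \<and> w \<noteq> v \<and> u \<noteq> w \<and> {v, u, w} \<in> F}"

definition near_triangulation :: "'a set \<Rightarrow> 'a set set \<Rightarrow> 'a set set \<Rightarrow> bool" where
  "near_triangulation V E F \<longleftrightarrow>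
     simple_graph V E \<and> F \<noteq> {} \<and>
     (\<forall>f\<in>F. f \<subseteq> V \<and> card f = 3) \<and>
     E = {e. card e = 2 \<and> (\<exists>f\<in>F. e \<subseteq> f)} \<and>
     V = \<Union> F \<and>
     (\<forall>e\<in>E. card {f\<in>F. e \<subseteq> f} \<le> 2) \<and>
     is_cycle_graph (outer_vertices E F) (outer_edges E F) \<and>
     (\<forall>v\<in>V - outer_vertices E F. is_cycle_graph (link_vertices E v) (link_edges F v)) \<and>
     (\<forall>v\<in>outer_vertices E F. is_path_graph (link_vertices E v) (link_edges F v)) \<and>
     graph_connected V E \<and>
     int (card V) - int (card E) + int (card F) = 1"

definition reach_avoiding :: "'a set \<Rightarrow> 'a set set \<Rightarrow> 'a set \<Rightarrow> 'a \<Rightarrow> 'a \<Rightarrow> bool" where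
  "reach_avoiding V E X x y \<longleftrightarrow> (x, y) \<in> (adj_rel (V - X) E)\<^sup>*"

end

theory Submission
  imports Defs
begin

text \<open>Sets of faces and sets of edges are treated as mod 2 chains.  The link conditions make the
  boundary map on face sets injective, and Euler's relation \<open>V - E + F = 1\<close> then forces every
  edge set with empty boundary to bound a set of faces: the disc has trivial first homology.
  Hence every chord of the outer cycle cuts off a side, and every such side contains an ear, an
  outer vertex of degree two all of whose faces lie in the side.

  Let \<open>K\<close> be a component of the faces having an inner vertex.  By the hypothesis on facial
  triangles at outer edges, every boundary edge of \<open>K\<close> is a chord joining two vertices of \<open>S\<close>,
  the sides beyond distinct boundary edges of \<open>K\<close> are disjoint, and \<open>K\<close> has at least three
  boundary edges spanning three vertices; so \<open>S\<close> has three vertices and there are three distinct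
  ears.  If there are exactly three ears, the boundary of \<open>K\<close> is a triangle, and there is no
  other component (it would lie beyond an edge of \<open>K\<close> and give that side two ears).  So \<open>K\<close>
  contains every face at an inner vertex, \<open>S\<close> is the triangle, and it separates the inner
  vertices from the rest of the outer cycle.\<close>

lemma odd_card_filter_sym_diff:
  assumes "finite A" "finite B"
  shows "odd (card {x \<in> sym_diff A B. P x}) \<longleftrightarrow> odd (card {x\<in>A. P x}) \<noteq> odd (card {x\<in>B. P x})"
proof -
  define A' B' where "A' = {x\<in>A. P x}" and "B' = {x\<in>B. P x}"
  have fin: "finite A'" "finite B'" using assms unfolding A'_def B'_def by auto
  have "{x \<in> sym_diff A B. P x} = (A' - B') \<union> (B' - A')" unfolding A'_def B'_def by blast
  then have "card {x \<in> sym_diff A B. P x} = card (A' - B') + card (B' - A')"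
    using fin by (simp add: card_Un_disjoint Diff_Int_distrib2)
  moreover have "card (A' - B') = card A' - card (A' \<inter> B')" "card (B' - A') = card B' - card (A' \<inter> B')"
    using fin by (simp_all add: card_Diff_subset_Int Int_commute)
  moreover have "card (A' \<inter> B') \<le> card A'" "card (A' \<inter> B') \<le> card B'"
    using fin by (simp_all add: card_mono)
  ultimately show ?thesis unfolding A'_def B'_def by auto
qed

lemma card_incident_pairs:
  assumes "\<forall>e\<in>X. card e = 2"
  shows "card {e\<in>X. v \<in> e} = card {u. {v, u} \<in> X}"
proof -
  have "inj_on (\<lambda>u. {v, u}) {u. {v, u} \<in> X}"
    by (auto simp: inj_on_def doubleton_eq_iff)
  moreover have "(\<lambda>u. {v, u}) ` {u. {v, u} \<in> X} = {e\<in>X. v \<in> e}"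
  proof
    show "{e\<in>X. v \<in> e} \<subseteq> (\<lambda>u. {v, u}) ` {u. {v, u} \<in> X}"
    proof
      fix e assume e: "e \<in> {e\<in>X. v \<in> e}"
      then obtain a b where "e = {a, b}" using assms by (auto simp: card_2_iff)
      then have "e = {v, if v = a then b else a}" using e by auto
      then show "e \<in> (\<lambda>u. {v, u}) ` {u. {v, u} \<in> X}" using e by auto
    qed
  qed blast
  ultimately show ?thesis using card_image by fastforce
qed

text \<open>Such a map is linear over \<open>GF(2)\<close>: adding a kernel element to a chosen preimage embeds
  kernel \<open>\<times>\<close> image into \<open>Pow X\<close>.\<close>
lemma card_kernel_mult_card_image_le:
  assumes "finite X"
    and add: "\<And>A B. A \<subseteq> X \<Longrightarrow> B \<subseteq> X \<Longrightarrow> \<phi> (sym_diff A B) = sym_diff (\<phi> A) (\<phi> B)"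
  shows "card {A. A \<subseteq> X \<and> \<phi> A = {}} * card (\<phi> ` Pow X) \<le> 2 ^ card X"
proof -
  define ker where "ker = {A. A \<subseteq> X \<and> \<phi> A = {}}"
  define s where "s y = (SOME A. A \<subseteq> X \<and> \<phi> A = y)" for y
  have s: "s y \<subseteq> X \<and> \<phi> (s y) = y" if "y \<in> \<phi> ` Pow X" for y
    unfolding s_def by (rule someI_ex) (use that in blast)
  define g where "g = (\<lambda>(k, y). sym_diff k (s y))"
  have \<phi>_g: "\<phi> (g (k, y)) = y" if "k \<in> ker" "y \<in> \<phi> ` Pow X" for k y
    using add[of k "s y"] s[OF that(2)] that(1) unfolding g_def ker_def by auto
  have "inj_on g (ker \<times> \<phi> ` Pow X)"
  proof (rule inj_onI)
    fix p1 p2 assume 1: "p1 \<in> ker \<times> \<phi> ` Pow X" and 2: "p2 \<in> ker \<times> \<phi> ` Pow X"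
      and eq: "g p1 = g p2"
    have "snd p1 = snd p2" using \<phi>_g[of "fst p1" "snd p1"] \<phi>_g[of "fst p2" "snd p2"] 1 2 eq
      by (metis mem_Times_iff prod.collapse)
    moreover have "sym_diff (fst p1) (s (snd p1)) = sym_diff (fst p2) (s (snd p1))"
      using eq \<open>snd p1 = snd p2\<close> unfolding g_def by (simp add: case_prod_beta)
    then have "fst p1 = fst p2" by (auto simp: set_eq_iff)
    ultimately show "p1 = p2" by (simp add: prod_eq_iff)
  qed
  moreover have "g ` (ker \<times> \<phi> ` Pow X) \<subseteq> Pow X"
    using s unfolding g_def ker_def by auto
  ultimately have "card (ker \<times> \<phi> ` Pow X) \<le> card (Pow X)"
    using \<open>finite X\<close> by (metis card_image card_mono finite_Pow_iff)
  then show ?thesis using \<open>finite X\<close> unfolding ker_def by (simp add: card_cartesian_product card_Pow)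
qed

lemma link_edges_iff:
  "{p, q} \<in> link_edges F u \<longleftrightarrow> p \<noteq> u \<and> q \<noteq> u \<and> p \<noteq> q \<and> {u, p, q} \<in> F"
  unfolding link_edges_def by (auto simp: doubleton_eq_iff insert_commute)

section \<open>Mod 2 chains of a near triangulation\<close>

locale near_tri =
  fixes V :: "'a set" and E F :: "'a set set"
  assumes near_tri: "near_triangulation V E F"
begin

abbreviation "OE \<equiv> outer_edges E F"
abbreviation "OV \<equiv> outer_vertices E F"

definition edge_faces :: "'a set \<Rightarrow> 'a set set" where
  "edge_faces e = {f\<in>F. e \<subseteq> f}"

definition bd_faces :: "'a set set \<Rightarrow> 'a set set" where
  "bd_faces Z = {e\<in>E. odd (card {f\<in>Z. e \<subseteq> f})}"

definition bd_edges :: "'a set set \<Rightarrow> 'a set" where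
  "bd_edges D = {v\<in>V. odd (card {e\<in>D. v \<in> e})}"

lemma
  shows simple_VE: "simple_graph V E"
    and faces_F: "\<forall>f\<in>F. f \<subseteq> V \<and> card f = 3"
    and E_eq: "E = {e. card e = 2 \<and> (\<exists>f\<in>F. e \<subseteq> f)}"
    and V_eq_Union_F: "V = \<Union> F"
    and edge_faces_le: "\<forall>e\<in>E. card {f\<in>F. e \<subseteq> f} \<le> 2"
    and OV_is_cycle: "is_cycle_graph OV OE"
    and inner_links: "\<forall>v\<in>V - OV. is_cycle_graph (link_vertices E v) (link_edges F v)"
    and outer_links: "\<forall>v\<in>OV. is_path_graph (link_vertices E v) (link_edges F v)"
    and graph_connected_V: "graph_connected V E"
    and euler_int: "int (card V) - int (card E) + int (card F) = 1"
  by (insert near_tri[unfolded near_triangulation_def], elim conjE, assumption)+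

lemma finite_V: "finite V"
  using simple_VE unfolding simple_graph_def by blast

lemma faceD: "f \<in> F \<Longrightarrow> f \<subseteq> V \<and> card f = 3"
  using faces_F by blast

lemma edge_iff: "e \<in> E \<longleftrightarrow> card e = 2 \<and> (\<exists>f\<in>F. e \<subseteq> f)"
  using E_eq by blast

lemma edgeD: "e \<in> E \<Longrightarrow> e \<subseteq> V \<and> card e = 2"
  using simple_VE unfolding simple_graph_def by blast

lemma card_edge_faces_le_2: "e \<in> E \<Longrightarrow> card (edge_faces e) \<le> 2"
  using edge_faces_le unfolding edge_faces_def by blast

lemma link_connected: "u \<in> V \<Longrightarrow> graph_connected (link_vertices E u) (link_edges F u)"
  using inner_links outer_links unfolding is_cycle_graph_def is_path_graph_def
  by (cases "u \<in> OV") blast+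

lemma euler: "card E + 1 = card V + card F"
  using euler_int by linarith

lemma finite_F: "finite F"
proof (rule finite_subset)
  show "F \<subseteq> Pow V" using faceD by auto
qed (simp add: finite_V)

lemma finite_E: "finite E"
proof (rule finite_subset)
  show "E \<subseteq> Pow V" using edgeD by auto
qed (simp add: finite_V)

lemma finite_edge_faces: "finite (edge_faces e)"
  unfolding edge_faces_def using finite_F by auto

lemma edge_faces_nonempty: "e \<in> E \<Longrightarrow> edge_faces e \<noteq> {}"
  unfolding edge_faces_def using edge_iff by auto

lemma outer_edge_iff: "e \<in> OE \<longleftrightarrow> e \<in> E \<and> card (edge_faces e) = 1"
  unfolding outer_edges_def edge_faces_def by auto

lemma outer_edge_in_E: "e \<in> OE \<Longrightarrow> e \<in> E"
  using outer_edge_iff by auto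

lemma OV_eq_Union_OE: "OV = \<Union> OE"
  unfolding outer_vertices_def by simp

lemma OV_subset_V: "OV \<subseteq> V"
  using OV_eq_Union_OE outer_edge_in_E edgeD by blast

lemma outer_edge_vertices: "{x, y} \<in> OE \<Longrightarrow> x \<in> OV \<and> y \<in> OV"
  using OV_eq_Union_OE by auto

lemma OE_nonempty: "OE \<noteq> {}"
  using OV_is_cycle OV_eq_Union_OE unfolding is_cycle_graph_def by auto

lemma edge_eq_pair: "e \<in> E \<Longrightarrow> \<exists>a b. e = {a, b} \<and> a \<noteq> b"
  using edgeD by (auto simp: card_2_iff)

lemma face_eq_triple:
  assumes "f \<in> F" "u \<in> f"
  shows "\<exists>a b. f = {u, a, b} \<and> u \<noteq> a \<and> u \<noteq> b \<and> a \<noteq> b"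
proof -
  obtain x y z where f: "f = {x, y, z}" "x \<noteq> y" "y \<noteq> z" "x \<noteq> z"
    using faceD[OF assms(1)] by (auto simp: card_3_iff)
  then consider "u = x" | "u = y" | "u = z" using assms(2) by auto
  then show ?thesis
  proof cases
    case 1 then show ?thesis using f by blast
  next
    case 2 then show ?thesis using f by (intro exI[of _ x] exI[of _ z]) auto
  next
    case 3 then show ?thesis using f by (intro exI[of _ x] exI[of _ y]) auto
  qed
qed

lemma face_pair_edge: "f \<in> F \<Longrightarrow> a \<in> f \<Longrightarrow> b \<in> f \<Longrightarrow> a \<noteq> b \<Longrightarrow> {a, b} \<in> E"
  using edge_iff by auto

lemma face_edges:
  assumes "{a, b, c} \<in> F" "a \<noteq> b" "b \<noteq> c" "a \<noteq> c"
  shows "{e\<in>E. e \<subseteq> {a, b, c}} = {{a, b}, {a, c}, {b, c}}"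
proof
  have "{a, b} \<in> E" "{a, c} \<in> E" "{b, c} \<in> E"
    using face_pair_edge[OF assms(1)] assms by simp_all
  then show "{{a, b}, {a, c}, {b, c}} \<subseteq> {e\<in>E. e \<subseteq> {a, b, c}}" by simp
  show "{e\<in>E. e \<subseteq> {a, b, c}} \<subseteq> {{a, b}, {a, c}, {b, c}}"
  proof
    fix e assume e: "e \<in> {e\<in>E. e \<subseteq> {a, b, c}}"
    then obtain p q where "e = {p, q}" "p \<noteq> q" using edge_eq_pair[of e] by auto
    with e have "e = {p, q}" "p \<noteq> q" "p \<in> {a, b, c}" "q \<in> {a, b, c}" by auto
    then show "e \<in> {{a, b}, {a, c}, {b, c}}" by (auto simp: doubleton_eq_iff)
  qed
qed

lemma outer_edge_faces: "e \<in> OE \<Longrightarrow> \<exists>f. edge_faces e = {f}"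
  by (simp add: outer_edge_iff card_1_singleton_iff)

lemma inner_edge_faces:
  assumes "e \<in> E" "e \<notin> OE"
  shows "\<exists>f1 f2. f1 \<noteq> f2 \<and> edge_faces e = {f1, f2}"
proof -
  have "card (edge_faces e) \<noteq> 0"
    using edge_faces_nonempty[OF assms(1)] finite_edge_faces by simp
  moreover have "card (edge_faces e) \<noteq> 1" using assms outer_edge_iff[of e] by simp
  ultimately have "card (edge_faces e) = 2" using card_edge_faces_le_2[OF assms(1)] by linarith
  then show ?thesis unfolding card_2_iff by blast
qed

lemma edge_faces_eq_pair:
  assumes "e \<in> E" "f \<in> edge_faces e" "f' \<in> edge_faces e" "f \<noteq> f'"
  shows "edge_faces e = {f, f'}" "e \<notin> OE"
proof -
  have "{f, f'} \<subseteq> edge_faces e" "card (edge_faces e) \<le> card {f, f'}"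
    using assms card_edge_faces_le_2[OF assms(1)] by simp_all
  then have "{f, f'} = edge_faces e" by (intro card_seteq[OF finite_edge_faces])
  then show "edge_faces e = {f, f'}" by simp
  then show "e \<notin> OE" using assms(4) outer_edge_iff[of e] by simp
qed

section \<open>Boundaries of face sets\<close>

lemma bd_faces_subset_E: "bd_faces Z \<subseteq> E"
  unfolding bd_faces_def by blast

lemma finite_bd_faces: "finite (bd_faces Z)"
  using bd_faces_subset_E finite_E by (rule finite_subset)

lemma bd_faces_empty [simp]: "bd_faces {} = {}"
  unfolding bd_faces_def by simp

lemma bd_faces_sym_diff:
  assumes "A \<subseteq> F" "B \<subseteq> F"
  shows "bd_faces (sym_diff A B) = sym_diff (bd_faces A) (bd_faces B)"
proof -
  have "finite A" "finite B" using assms finite_F by (auto intro: finite_subset)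
  then have "\<And>e. odd (card {f \<in> sym_diff A B. e \<subseteq> f}) \<longleftrightarrow>
      odd (card {f\<in>A. e \<subseteq> f}) \<noteq> odd (card {f\<in>B. e \<subseteq> f})"
    by (rule odd_card_filter_sym_diff)
  then show ?thesis unfolding bd_faces_def by blast
qed

lemma bd_faces_F: "bd_faces F = OE"
proof -
  have "odd (card (edge_faces e)) \<longleftrightarrow> card (edge_faces e) = 1" if "e \<in> E" for e
  proof -
    have "card (edge_faces e) \<noteq> 0"
      using edge_faces_nonempty[OF that] finite_edge_faces by simp
    then have "card (edge_faces e) = 1 \<or> card (edge_faces e) = 2"
      using card_edge_faces_le_2[OF that] by linarith
    then show ?thesis by auto
  qed
  then show ?thesis unfolding bd_faces_def outer_edges_def edge_faces_def by blast
qed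

lemma bd_faces_singleton: "f \<in> F \<Longrightarrow> bd_faces {f} = {e\<in>E. e \<subseteq> f}"
  unfolding bd_faces_def by (auto simp: Collect_conv_if)

lemma bd_edges_empty [simp]: "bd_edges {} = {}"
  unfolding bd_edges_def by simp

lemma bd_edges_sym_diff:
  assumes "finite A" "finite B"
  shows "bd_edges (sym_diff A B) = sym_diff (bd_edges A) (bd_edges B)"
proof -
  have "\<And>v. odd (card {e \<in> sym_diff A B. v \<in> e}) \<longleftrightarrow>
      odd (card {e\<in>A. v \<in> e}) \<noteq> odd (card {e\<in>B. v \<in> e})"
    using assms by (rule odd_card_filter_sym_diff)
  then show ?thesis unfolding bd_edges_def by blast
qed

lemma bd_edges_edge: "a \<in> V \<Longrightarrow> b \<in> V \<Longrightarrow> a \<noteq> b \<Longrightarrow> bd_edges {{a, b}} = {a, b}"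
  unfolding bd_edges_def by (auto simp: Collect_conv_if)

lemma bd_edges_bd_faces_singleton:
  assumes "f \<in> F"
  shows "bd_edges (bd_faces {f}) = {}"
proof -
  obtain a b c where abc: "f = {a, b, c}" "a \<noteq> b" "b \<noteq> c" "a \<noteq> c"
    using faceD[OF assms] by (auto simp: card_3_iff)
  have V: "a \<in> V" "b \<in> V" "c \<in> V" using faceD[OF assms] abc by auto
  have "bd_faces {f} = {{a, b}, {a, c}, {b, c}}"
    using bd_faces_singleton[OF assms] face_edges assms abc by simp
  also have "\<dots> = sym_diff (sym_diff {{a, b}} {{a, c}}) {{b, c}}"
    using abc by (auto simp: doubleton_eq_iff)
  finally have "bd_edges (bd_faces {f}) = sym_diff (sym_diff {a, b} {a, c}) {b, c}"
    using V abc by (simp add: bd_edges_sym_diff bd_edges_edge)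
  then show ?thesis using abc by auto
qed

lemma bd_edges_bd_faces:
  assumes "Z \<subseteq> F"
  shows "bd_edges (bd_faces Z) = {}"
proof -
  have "finite Z" using assms finite_F by (auto intro: finite_subset)
  then show ?thesis using assms
  proof (induction Z rule: finite_induct)
    case (insert f Z)
    then have eq: "insert f Z = sym_diff {f} Z" by auto
    have "bd_faces (insert f Z) = sym_diff (bd_faces {f}) (bd_faces Z)"
      unfolding eq by (rule bd_faces_sym_diff) (use insert.prems in auto)
    then show ?case using insert bd_edges_bd_faces_singleton
      by (simp only: bd_edges_sym_diff finite_bd_faces) auto
  qed simp
qed

lemma mem_bd_faces_iff:
  assumes "Z \<subseteq> F" "edge_faces e = {f1, f2}" "f1 \<noteq> f2" "e \<in> E"
  shows "e \<in> bd_faces Z \<longleftrightarrow> (f1 \<in> Z) \<noteq> (f2 \<in> Z)"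
proof -
  have "{f\<in>Z. e \<subseteq> f} = Z \<inter> {f1, f2}"
    using assms(1,2) unfolding edge_faces_def by blast
  moreover have "odd (card (Z \<inter> {f1, f2})) \<longleftrightarrow> (f1 \<in> Z) \<noteq> (f2 \<in> Z)"
    using assms(3) by (cases "f1 \<in> Z"; cases "f2 \<in> Z") (simp_all add: Int_insert_right)
  ultimately show ?thesis using assms(4) unfolding bd_faces_def by simp
qed

lemma bd_inner_edge_faces:
  assumes "Z \<subseteq> F" "e \<in> bd_faces Z" "e \<notin> OE"
  shows "\<exists>h1 h2. edge_faces e = {h1, h2} \<and> h1 \<noteq> h2 \<and> h1 \<in> Z \<and> h2 \<notin> Z"
proof -
  have "e \<in> E" using assms(2) bd_faces_subset_E by blast
  then obtain f1 f2 where f: "f1 \<noteq> f2" "edge_faces e = {f1, f2}"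
    using inner_edge_faces[OF _ assms(3)] by blast
  then have "(f1 \<in> Z) \<noteq> (f2 \<in> Z)" using mem_bd_faces_iff[OF assms(1) f(2) f(1) \<open>e \<in> E\<close>] assms(2) by simp
  then show ?thesis
  proof (cases "f1 \<in> Z")
    case True
    then have "f2 \<notin> Z" using \<open>(f1 \<in> Z) \<noteq> (f2 \<in> Z)\<close> by blast
    then show ?thesis using f True by (intro exI[of _ f1] exI[of _ f2]) simp
  next
    case False
    then have "f2 \<in> Z" using \<open>(f1 \<in> Z) \<noteq> (f2 \<in> Z)\<close> by blast
    then show ?thesis using f False by (intro exI[of _ f2] exI[of _ f1]) (simp add: insert_commute)
  qed
qed

lemma faces_on_edge_same_side:
  assumes "Z \<subseteq> F" "e \<in> E" "e \<notin> bd_faces Z - OE" "f \<in> edge_faces e" "f' \<in> edge_faces e"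
  shows "f \<in> Z \<longleftrightarrow> f' \<in> Z"
proof (cases "f = f'")
  case False
  then have "edge_faces e = {f, f'}" "e \<notin> OE"
    using edge_faces_eq_pair[OF assms(2,4,5)] by simp_all
  then have "e \<notin> bd_faces Z" using assms(3) by simp
  then show ?thesis using mem_bd_faces_iff[OF assms(1) \<open>edge_faces e = {f, f'}\<close> False assms(2)]
    by simp
qed simp

text \<open>Walk around the link of \<open>u\<close>, which is connected: consecutive faces \<open>{u, t, t'}\<close> of the
  walk share the edge \<open>{u, t'}\<close>.\<close>
lemma faces_at_vertex_same_side:
  assumes u: "u \<in> V" and Z: "Z \<subseteq> F" and no_bd: "\<And>t. {u, t} \<notin> bd_faces Z - OE"
    and f1: "f1 \<in> F" "u \<in> f1" and f2: "f2 \<in> F" "u \<in> f2"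
  shows "f1 \<in> Z \<longleftrightarrow> f2 \<in> Z"
proof -
  have same: "f \<in> Z \<longleftrightarrow> f' \<in> Z"
    if "{u, t} \<in> E" "f \<in> F" "f' \<in> F" "{u, t} \<subseteq> f" "{u, t} \<subseteq> f'" for t f f'
    using faces_on_edge_same_side[OF Z that(1) no_bd[of t], of f f'] that(2-5) by (simp add: edge_faces_def)
  obtain a b where ab: "f1 = {u, a, b}" "u \<noteq> a" using face_eq_triple f1 by blast
  obtain c d where cd: "f2 = {u, c, d}" "u \<noteq> c" using face_eq_triple f2 by blast
  have "{u, a} \<in> E" using face_pair_edge[OF f1(1), of u a] ab by simp
  have "{u, c} \<in> E" using face_pair_edge[OF f2(1), of u c] cd by simp
  have "(a, c) \<in> (adj_rel (link_vertices E u) (link_edges F u))\<^sup>*"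
    using link_connected[OF u] \<open>{u, a} \<in> E\<close> \<open>{u, c} \<in> E\<close>
    unfolding graph_connected_def link_vertices_def by blast
  then have "\<forall>f\<in>F. {u, c} \<subseteq> f \<longrightarrow> (f \<in> Z \<longleftrightarrow> f1 \<in> Z)"
  proof (induction rule: rtrancl_induct)
    case base
    show ?case using same[OF \<open>{u, a} \<in> E\<close> _ f1(1)] ab(1) by simp
  next
    case (step t t')
    then have h: "t' \<noteq> u" "t \<noteq> t'" "{u, t, t'} \<in> F"
      unfolding adj_rel_def link_edges_iff by auto
    have "{u, t'} \<in> E" using face_pair_edge[OF h(3), of u t'] h by simp
    moreover have "{u, t, t'} \<in> Z \<longleftrightarrow> f1 \<in> Z" using step.IH h(3) by simp
    ultimately show ?case using same[OF _ _ h(3)] by auto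
  qed
  then show ?thesis using f2(1) cd(1) by simp
qed

lemma single_inner_bd_edge:
  "bd_faces W - OE = {e'} \<Longrightarrow> e \<in> bd_faces W \<Longrightarrow> e \<notin> OE \<Longrightarrow> e = e'"
  by blast

lemma faces_at_vertex_off_chord:
  assumes W: "W \<subseteq> F" "bd_faces W - OE = {c}" and x: "x \<in> V" "x \<notin> c"
    and f: "f \<in> F" "x \<in> f" and f': "f' \<in> F" "x \<in> f'"
  shows "f \<in> W \<longleftrightarrow> f' \<in> W"
proof -
  have no_bd: "{x, t} \<notin> bd_faces W - OE" for t
  proof
    assume "{x, t} \<in> bd_faces W - OE"
    then have "{x, t} = c" using single_inner_bd_edge[OF W(2)] by blast
    moreover have "x \<in> {x, t}" by simp
    ultimately show False using x(2) by simp
  qed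
  show ?thesis by (rule faces_at_vertex_same_side[OF x(1) W(1) no_bd f f'])
qed

lemma face_nonempty:
  assumes "f \<in> F" shows "\<exists>u. u \<in> f"
proof -
  have "card f = 3" using faceD[OF assms] by simp
  then have "f \<noteq> {}" by auto
  then show ?thesis by blast
qed

lemma bd_faces_eq_empty:
  assumes Z: "Z \<subseteq> F" and bZ: "bd_faces Z = {}"
  shows "Z = {}"
proof (rule ccontr)
  assume "Z \<noteq> {}"
  then obtain f0 u0 where f0: "f0 \<in> Z" "u0 \<in> f0" using Z face_nonempty by blast
  have f0F: "f0 \<in> F" using f0 Z by blast
  have u0: "u0 \<in> V" using f0F f0 faceD by blast
  have no_bd: "{u, t} \<notin> bd_faces Z - OE" for u t using bZ by simp
  have all_in: "\<forall>h\<in>F. u \<in> h \<longrightarrow> h \<in> Z" if "u \<in> V" for u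
  proof -
    have "(u0, u) \<in> (adj_rel V E)\<^sup>*"
      using graph_connected_V u0 that unfolding graph_connected_def by blast
    then show ?thesis
    proof (induction rule: rtrancl_induct)
      case base
      show ?case using faces_at_vertex_same_side[OF u0 Z no_bd _ _ f0F f0(2)] f0(1) by blast
    next
      case (step w u)
      then have "{w, u} \<in> E" "u \<in> V" unfolding adj_rel_def by auto
      then obtain h where h: "h \<in> F" "{w, u} \<subseteq> h" using edge_iff[of "{w, u}"] by blast
      then have "h \<in> Z" using step.IH by simp
      then show ?case using faces_at_vertex_same_side[OF \<open>u \<in> V\<close> Z no_bd _ _ h(1)] h(2) by blast
    qed
  qed
  have "F \<subseteq> Z"
  proof
    fix f assume "f \<in> F"
    then obtain u where "u \<in> f" using face_nonempty by blast
    then show "f \<in> Z" using all_in[of u] faceD \<open>f \<in> F\<close> by blast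
  qed
  then have "Z = F" using Z by blast
  then show False using bZ bd_faces_F OE_nonempty by simp
qed

lemma bd_faces_inj:
  assumes "A \<subseteq> F" "B \<subseteq> F" "bd_faces A = bd_faces B"
  shows "A = B"
proof -
  have "bd_faces (sym_diff A B) = {}" using bd_faces_sym_diff[OF assms(1,2)] assms(3) by simp
  moreover have "sym_diff A B \<subseteq> F" using assms(1,2) by auto
  ultimately have "sym_diff A B = {}" by (rule bd_faces_eq_empty[rotated])
  then show ?thesis by auto
qed

section \<open>Cycles bound, and chords cut the disc\<close>

lemma finite_subset_E: "D \<subseteq> E \<Longrightarrow> finite D"
  by (rule finite_subset[OF _ finite_E])

lemma bd_edges_walk:
  assumes "X \<subseteq> E" "(p, q) \<in> (adj_rel W X)\<^sup>*"
  shows "\<exists>D\<subseteq>X. bd_edges D = sym_diff {p} {q}"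
  using assms(2)
proof (induction rule: rtrancl_induct)
  case base
  show ?case by (intro exI[of _ "{}"]) simp
next
  case (step w u)
  obtain D where D: "D \<subseteq> X" "bd_edges D = sym_diff {p} {w}" using step.IH by blast
  have wu: "{w, u} \<in> X" using step.hyps(2) unfolding adj_rel_def by simp
  then have "{w, u} \<subseteq> V \<and> card {w, u} = 2" using assms(1) edgeD by blast
  then have wuV: "w \<in> V" "u \<in> V" "w \<noteq> u" by auto
  have "finite D" using D(1) assms(1) finite_subset_E by blast
  have "bd_edges (sym_diff D {{w, u}}) = sym_diff (bd_edges D) (bd_edges {{w, u}})"
    using \<open>finite D\<close> by (rule bd_edges_sym_diff) simp
  also have "\<dots> = sym_diff {p} {u}"
    unfolding D(2) bd_edges_edge[OF wuV] using wuV(3) by auto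
  finally have "bd_edges (sym_diff D {{w, u}}) = sym_diff {p} {u}" .
  moreover have "sym_diff D {{w, u}} \<subseteq> X" using D(1) wu by auto
  ultimately show ?case by blast
qed

lemma bd_edges_realises_subsets:
  assumes v0: "v0 \<in> V" and U: "U \<subseteq> V - {v0}"
  shows "\<exists>D\<subseteq>E. bd_edges D - {v0} = U"
proof -
  have "finite U" using U finite_V by (auto intro: finite_subset)
  then show ?thesis using U
  proof (induction U rule: finite_induct)
    case empty
    show ?case by (intro exI[of _ "{}"]) simp
  next
    case (insert u U)
    then obtain D where D: "D \<subseteq> E" "bd_edges D - {v0} = U" by blast
    have u: "u \<in> V" "u \<noteq> v0" using insert.prems by auto
    then have walk: "(v0, u) \<in> (adj_rel V E)\<^sup>*"
      using graph_connected_V v0 unfolding graph_connected_def by blast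
    obtain P where P: "P \<subseteq> E" "bd_edges P = sym_diff {v0} {u}"
      using bd_edges_walk[OF order_refl walk] by blast
    have "bd_edges (sym_diff D P) = sym_diff (bd_edges D) (bd_edges P)"
      using finite_subset_E[OF D(1)] finite_subset_E[OF P(1)] by (rule bd_edges_sym_diff)
    then have "bd_edges (sym_diff D P) - {v0} = insert u U"
      using D(2) P(2) u(2) insert.hyps(2) by auto
    moreover have "sym_diff D P \<subseteq> E" using D(1) P(1) by auto
    ultimately show ?case by (intro exI[of _ "sym_diff D P"] conjI)
  qed
qed

lemma OV_nonempty: "OV \<noteq> {}"
proof -
  obtain e where e: "e \<in> OE" using OE_nonempty by blast
  then have "card e = 2" using outer_edge_in_E edgeD by blast
  then obtain x where "x \<in> e" by fastforce
  then show ?thesis using e OV_eq_Union_OE by blast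
qed

lemma card_range_bd_edges: "2 ^ (card V - 1) \<le> card (bd_edges ` Pow E)"
proof -
  obtain v0 where v0: "v0 \<in> V" using OV_nonempty OV_subset_V by blast
  have "Pow (V - {v0}) \<subseteq> (\<lambda>T. T - {v0}) ` bd_edges ` Pow E"
  proof
    fix U assume "U \<in> Pow (V - {v0})"
    then obtain D where "D \<subseteq> E" "bd_edges D - {v0} = U"
      using bd_edges_realises_subsets[OF v0] by blast
    then show "U \<in> (\<lambda>T. T - {v0}) ` bd_edges ` Pow E" by blast
  qed
  then have "card (Pow (V - {v0})) \<le> card ((\<lambda>T. T - {v0}) ` bd_edges ` Pow E)"
    by (rule card_mono[rotated]) (simp add: finite_E)
  also have "\<dots> \<le> card (bd_edges ` Pow E)"
    by (rule card_image_le) (simp add: finite_E)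
  finally show ?thesis using v0 finite_V by (simp add: card_Pow)
qed

text \<open>Injectivity of \<open>bd_faces\<close> yields \<open>2 ^ card F\<close>
  boundaries, while the edge sets with empty boundary form the kernel of \<open>bd_edges\<close>, whose image
  has at least \<open>2 ^ (card V - 1)\<close> elements; by Euler's relation there are at most
  \<open>2 ^ (card E - card V + 1) = 2 ^ card F\<close> of them.\<close>
lemma cycle_is_boundary:
  assumes "D \<subseteq> E" "bd_edges D = {}"
  shows "\<exists>Z\<subseteq>F. bd_faces Z = D"
proof -
  define cycles where "cycles = {D. D \<subseteq> E \<and> bd_edges D = {}}"
  have sub: "bd_faces ` Pow F \<subseteq> cycles"
    unfolding cycles_def using bd_faces_subset_E bd_edges_bd_faces by blast
  have "inj_on bd_faces (Pow F)" unfolding inj_on_def using bd_faces_inj by blast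
  then have card_bd: "card (bd_faces ` Pow F) = 2 ^ card F"
    using finite_F by (simp add: card_image card_Pow)
  have kernel: "card cycles * card (bd_edges ` Pow E) \<le> 2 ^ card E"
    unfolding cycles_def
    using card_kernel_mult_card_image_le[OF finite_E bd_edges_sym_diff[OF finite_subset_E finite_subset_E]]
    by blast
  have "V \<noteq> {}" using OV_nonempty OV_subset_V by blast
  then have "card V \<noteq> 0" using finite_V by simp
  then have "card E = card F + (card V - 1)" using euler by linarith
  then have "card cycles * 2 ^ (card V - 1) \<le> 2 ^ card F * 2 ^ (card V - 1)"
    using le_trans[OF mult_le_mono2[OF card_range_bd_edges] kernel] by (simp add: power_add)
  then have "card cycles \<le> 2 ^ card F" by simp
  moreover have "finite cycles" unfolding cycles_def using finite_E by simp
  ultimately have "bd_faces ` Pow F = cycles" using card_seteq[OF _ sub] card_bd by simp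
  then have "D \<in> bd_faces ` Pow F" using assms unfolding cycles_def by simp
  then obtain Z where "Z \<in> Pow F" "D = bd_faces Z" by (rule imageE)
  then show ?thesis by auto
qed

lemma OE_subset_E: "OE \<subseteq> E"
  using outer_edge_in_E by blast

lemma card_outer_edges_at:
  assumes "v \<in> OV"
  shows "card {e\<in>OE. v \<in> e} = 2"
proof -
  have "\<forall>e\<in>OE. card e = 2" using outer_edge_in_E edgeD by blast
  then have "card {e\<in>OE. v \<in> e} = gdeg OE v" unfolding gdeg_def by (rule card_incident_pairs)
  then show ?thesis using OV_is_cycle assms unfolding is_cycle_graph_def by simp
qed

lemma outer_cycle_connected: "graph_connected OV OE"
  using OV_is_cycle unfolding is_cycle_graph_def by blast

lemma even_bd_faces_at:
  assumes "Z \<subseteq> F" "x \<in> V"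
  shows "even (card {e\<in>bd_faces Z. x \<in> e})"
  using bd_edges_bd_faces[OF assms(1)] assms(2) unfolding bd_edges_def by blast

text \<open>Every outer vertex lies on exactly two outer edges, so a subset of \<open>OE\<close> with empty
  boundary containing one of them contains both.\<close>
lemma outer_edges_at_subset:
  assumes D: "D \<subseteq> OE" "bd_edges D = {}" and v: "v \<in> OV" "\<exists>e\<in>D. v \<in> e"
  shows "{e\<in>OE. v \<in> e} \<subseteq> D"
proof -
  have sub: "{e\<in>D. v \<in> e} \<subseteq> {e\<in>OE. v \<in> e}" using D(1) by blast
  have fin: "finite {e\<in>OE. v \<in> e}" by (rule finite_subset_E) (use OE_subset_E in blast)
  have "v \<in> V" using OV_subset_V v(1) by blast
  then have "even (card {e\<in>D. v \<in> e})" using D(2) unfolding bd_edges_def by blast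
  moreover have "{e\<in>D. v \<in> e} \<noteq> {}" using v(2) by blast
  then have "card {e\<in>D. v \<in> e} \<noteq> 0" using finite_subset[OF sub fin] by simp
  moreover have "card {e\<in>D. v \<in> e} \<le> 2"
    using card_mono[OF fin sub] card_outer_edges_at[OF v(1)] by simp
  ultimately have "card {e\<in>D. v \<in> e} = 2" by presburger
  then have "{e\<in>D. v \<in> e} = {e\<in>OE. v \<in> e}"
    using card_subset_eq[OF fin sub] card_outer_edges_at[OF v(1)] by simp
  then show ?thesis by blast
qed

lemma cycle_in_OE_eq_OE:
  assumes D: "D \<subseteq> OE" "bd_edges D = {}" "D \<noteq> {}"
  shows "D = OE"
proof -
  note both = outer_edges_at_subset[OF D(1,2)]
  obtain e0 where e0: "e0 \<in> D" using D(3) by blast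
  then obtain a b where ab: "e0 = {a, b}" using edge_eq_pair[of e0] D(1) OE_subset_E by blast
  have a: "a \<in> OV" using e0 ab D(1) outer_edge_vertices by blast
  have at_OV: "{e\<in>OE. v \<in> e} \<subseteq> D" if "v \<in> OV" for v
  proof -
    have "(a, v) \<in> (adj_rel OV OE)\<^sup>*"
      using outer_cycle_connected a that unfolding graph_connected_def by blast
    then show ?thesis
    proof (induction rule: rtrancl_induct)
      case base
      have "\<exists>e\<in>D. a \<in> e" using e0 ab by blast
      then show ?case by (rule both[OF a])
    next
      case (step w u)
      then have "{w, u} \<in> OE" "u \<in> OV" unfolding adj_rel_def by auto
      then have "{w, u} \<in> D" using step.IH by blast
      then have "\<exists>e\<in>D. u \<in> e" by blast
      then show ?case by (rule both[OF \<open>u \<in> OV\<close>])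
    qed
  qed
  have "OE \<subseteq> D"
  proof
    fix e assume e: "e \<in> OE"
    then obtain p q where "e = {p, q}" using edge_eq_pair[of e] OE_subset_E by blast
    then have "p \<in> OV" "p \<in> e" using e OV_eq_Union_OE by auto
    then show "e \<in> D" using at_OV e by blast
  qed
  then show ?thesis using D(1) by blast
qed

lemma bd_faces_subset_OE:
  assumes "I \<subseteq> F" "bd_faces I \<subseteq> OE"
  shows "I = {} \<or> I = F"
proof (cases "bd_faces I = {}")
  case True
  then show ?thesis using bd_faces_eq_empty assms(1) by blast
next
  case False
  then have "bd_faces I = bd_faces F"
    using cycle_in_OE_eq_OE[OF assms(2) bd_edges_bd_faces[OF assms(1)]] bd_faces_F by simp
  then show ?thesis using bd_faces_inj[OF assms(1) order_refl] by blast
qed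

lemma uncrossed_face_set_empty:
  assumes I: "I \<subseteq> F" and f: "f \<in> F" "f \<notin> I"
    and uncrossed: "\<And>e h1 h2. e \<in> E \<Longrightarrow> e \<notin> OE \<Longrightarrow> edge_faces e = {h1, h2} \<Longrightarrow> h1 \<noteq> h2 \<Longrightarrow>
      h1 \<in> I \<Longrightarrow> h2 \<notin> I \<Longrightarrow> False"
  shows "I = {}"
proof -
  have "bd_faces I \<subseteq> OE"
  proof
    fix e assume eI: "e \<in> bd_faces I"
    show "e \<in> OE"
    proof (rule ccontr)
      assume eO: "e \<notin> OE"
      obtain h1 h2 where h: "edge_faces e = {h1, h2}" "h1 \<noteq> h2" "h1 \<in> I" "h2 \<notin> I"
        using bd_inner_edge_faces[OF I eI eO] by blast
      have "e \<in> E" using eI bd_faces_subset_E by blast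
      then show False by (rule uncrossed[OF _ eO h])
    qed
  qed
  then show ?thesis using bd_faces_subset_OE[OF I] f by blast
qed

lemma bd_faces_complement:
  assumes "W \<subseteq> F"
  shows "bd_faces (F - W) - OE = bd_faces W - OE"
proof -
  have eq: "sym_diff F W = F - W" using assms by blast
  have "bd_faces (F - W) = sym_diff OE (bd_faces W)"
    using bd_faces_sym_diff[OF order_refl assms] unfolding eq bd_faces_F .
  then show ?thesis by blast
qed

text \<open>A chord \<open>{a, z}\<close> together with an arc of the outer cycle from \<open>a\<close> to \<open>z\<close> has empty
  boundary, so it bounds a set of faces; its complement in \<open>F\<close> is the other side.\<close>
lemma chord_side:
  assumes a: "a \<in> OV" and z: "z \<in> OV" and az: "{a, z} \<in> E" "{a, z} \<notin> OE" and g: "g \<in> F"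
  shows "\<exists>W\<subseteq>F. bd_faces W - OE = {{a, z}} \<and> g \<notin> W"
proof -
  have "{a, z} \<subseteq> V \<and> card {a, z} = 2" using edgeD[OF az(1)] .
  then have azV: "a \<in> V" "z \<in> V" "a \<noteq> z" by auto
  have walk: "(a, z) \<in> (adj_rel OV OE)\<^sup>*"
    using outer_cycle_connected a z unfolding graph_connected_def by blast
  obtain D where D: "D \<subseteq> OE" "bd_edges D = sym_diff {a} {z}"
    using bd_edges_walk[OF OE_subset_E walk] by blast
  have "bd_edges (sym_diff D {{a, z}}) = sym_diff (bd_edges D) (bd_edges {{a, z}})"
    using finite_subset_E[OF order_trans[OF D(1) OE_subset_E]] by (rule bd_edges_sym_diff) simp
  also have "\<dots> = {}" unfolding D(2) bd_edges_edge[OF azV] using azV(3) by auto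
  finally have "bd_edges (sym_diff D {{a, z}}) = {}" .
  moreover have "sym_diff D {{a, z}} \<subseteq> E" using D(1) az(1) OE_subset_E by blast
  ultimately obtain W0 where W0: "W0 \<subseteq> F" "bd_faces W0 = sym_diff D {{a, z}}"
    using cycle_is_boundary[of "sym_diff D {{a, z}}"] by blast
  have "sym_diff D {{a, z}} - OE = {{a, z}}" using D(1) az(2) by blast
  then have bW0: "bd_faces W0 - OE = {{a, z}}" unfolding W0(2) .
  show ?thesis
  proof (cases "g \<in> W0")
    case True
    then have "F - W0 \<subseteq> F" "bd_faces (F - W0) - OE = {{a, z}}" "g \<notin> F - W0"
      using bd_faces_complement[OF W0(1)] bW0 by auto
    then show ?thesis by (intro exI[of _ "F - W0"]) simp
  next
    case False
    then show ?thesis using W0(1) bW0 by (intro exI[of _ W0]) simp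
  qed
qed

lemma bd_faces_other_edge:
  assumes K: "K \<subseteq> F" and xy: "{x, y} \<in> bd_faces K"
  shows "\<exists>z. {x, z} \<in> bd_faces K \<and> z \<noteq> y \<and> z \<noteq> x"
proof -
  define Sx where "Sx = {e\<in>bd_faces K. x \<in> e}"
  have "x \<in> V" using xy bd_faces_subset_E edgeD by blast
  then have "even (card Sx)" unfolding Sx_def by (rule even_bd_faces_at[OF K])
  moreover have "{x, y} \<in> Sx" unfolding Sx_def using xy by simp
  ultimately have "Sx \<noteq> {{x, y}}" by force
  then obtain e where e: "e \<in> Sx" "e \<noteq> {x, y}" using \<open>{x, y} \<in> Sx\<close> by blast
  then have "e \<in> E" "x \<in> e" unfolding Sx_def using bd_faces_subset_E by auto
  then obtain p q where pq: "e = {p, q}" "p \<noteq> q" using edge_eq_pair by blast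
  define z where "z = (if p = x then q else p)"
  have "e = {x, z}" "z \<noteq> x" using pq \<open>x \<in> e\<close> unfolding z_def by auto
  then show ?thesis using e unfolding Sx_def by auto
qed

section \<open>Ears\<close>

lemma outer_edge_unique_face:
  assumes "e \<in> OE" "f \<in> F" "f' \<in> F" "e \<subseteq> f" "e \<subseteq> f'"
  shows "f = f'"
proof -
  obtain g where "edge_faces e = {g}" using outer_edge_faces[OF assms(1)] by blast
  moreover have "f \<in> edge_faces e" "f' \<in> edge_faces e" using assms(2-5) unfolding edge_faces_def by simp_all
  ultimately show ?thesis by simp
qed

lemma outer_edge_face_in_bd:
  assumes "Z \<subseteq> F" "e \<in> bd_faces Z" "e \<in> OE" "f \<in> F" "e \<subseteq> f"
  shows "f \<in> Z"
proof -
  have "odd (card {f\<in>Z. e \<subseteq> f})" using assms(2) unfolding bd_faces_def by blast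
  then have "{f\<in>Z. e \<subseteq> f} \<noteq> {}" by (intro notI) simp
  then obtain f' where f': "f' \<in> Z" "e \<subseteq> f'" by blast
  then have "f' \<in> F" using assms(1) by blast
  then have "f = f'" using outer_edge_unique_face[OF assms(3,4)] assms(5) f'(2) by blast
  then show ?thesis using f'(1) by simp
qed

text \<open>If two outer edges at \<open>a\<close> lie on a common face, the link of \<open>a\<close> is that single link
  edge: any further link edge at \<open>x\<close> or \<open>y\<close> would give a second face on an outer edge.\<close>
lemma outer_vertex_of_degree_two:
  assumes ax: "{a, x} \<in> OE" and ay: "{a, y} \<in> OE" and xy: "x \<noteq> y" and g: "{a, x, y} \<in> F"
  shows "gdeg E a = 2" "\<forall>h\<in>F. a \<in> h \<longrightarrow> h = {a, x, y}"
proof -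
  have aV: "a \<in> V" using outer_edge_vertices[OF ax] OV_subset_V by blast
  have "a \<noteq> x" "a \<noteq> y" using edgeD[OF outer_edge_in_E[OF ax]] edgeD[OF outer_edge_in_E[OF ay]] by auto
  define L where "L = link_vertices E a"
  have only_xy: "t \<in> {x, y}" if "{p, t} \<in> link_edges F a" "p \<in> {x, y}" for p t
  proof -
    have h: "t \<noteq> a" "p \<noteq> t" "{a, p, t} \<in> F" using that(1) unfolding link_edges_iff by simp_all
    have "{a, p} \<in> OE" "{a, p} \<subseteq> {a, x, y}" using that(2) ax ay by auto
    then have "{a, p, t} = {a, x, y}" using outer_edge_unique_face[OF _ h(3) g] by simp
    then have "t \<in> {a, x, y}" by blast
    then show ?thesis using h(1) by simp
  qed
  have xL: "x \<in> L" "y \<in> L"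
    using face_pair_edge[OF g, of a x] face_pair_edge[OF g, of a y] \<open>a \<noteq> x\<close> \<open>a \<noteq> y\<close>
    unfolding L_def link_vertices_def by auto
  have "L \<subseteq> {x, y}"
  proof
    fix t assume "t \<in> L"
    then have "(x, t) \<in> (adj_rel L (link_edges F a))\<^sup>*"
      using link_connected[OF aV] xL unfolding L_def graph_connected_def by blast
    then show "t \<in> {x, y}"
    proof (induction rule: rtrancl_induct)
      case (step w t)
      then have "{w, t} \<in> link_edges F a" unfolding adj_rel_def by blast
      then show ?case using only_xy step.IH by blast
    qed simp
  qed
  then have L: "L = {x, y}" using xL by blast
  then show "gdeg E a = 2" using xy unfolding gdeg_def L_def link_vertices_def by simp
  show "\<forall>h\<in>F. a \<in> h \<longrightarrow> h = {a, x, y}"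
  proof (intro ballI impI)
    fix h assume h: "h \<in> F" "a \<in> h"
    obtain p q where pq: "h = {a, p, q}" "a \<noteq> p" "a \<noteq> q" "p \<noteq> q" using face_eq_triple[OF h] by blast
    have "p \<in> L" "q \<in> L"
      using face_pair_edge[OF h(1), of a p] face_pair_edge[OF h(1), of a q] pq
      unfolding L_def link_vertices_def by auto
    then have "{p, q} = {x, y}" using L pq(4) by auto
    then show "h = {a, x, y}" using pq(1) by simp
  qed
qed

definition ears :: "'a set set \<Rightarrow> 'a set" where
  "ears Z = {w\<in>OV. gdeg E w = 2 \<and> (\<forall>g\<in>F. w \<in> g \<longrightarrow> g \<in> Z)}"

lemma ears_mono: "Z \<subseteq> Z' \<Longrightarrow> ears Z \<subseteq> ears Z'"
  unfolding ears_def by blast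

lemma ears_disjoint:
  assumes "Z1 \<inter> Z2 = {}"
  shows "ears Z1 \<inter> ears Z2 = {}"
proof (rule ccontr)
  assume "ears Z1 \<inter> ears Z2 \<noteq> {}"
  then obtain w where w: "w \<in> ears Z1" "w \<in> ears Z2" by blast
  then have "w \<in> V" using OV_subset_V unfolding ears_def by blast
  then obtain g where "g \<in> F" "w \<in> g" using V_eq_Union_F by blast
  then show False using w assms unfolding ears_def by blast
qed


lemma finite_ears: "finite (ears Z)"
proof -
  have "ears Z \<subseteq> V" unfolding ears_def using OV_subset_V by blast
  then show ?thesis by (rule finite_subset[OF _ finite_V])
qed

lemma bd_faces_three_edges:
  assumes K: "K \<subseteq> F" and ne: "bd_faces K \<noteq> {}"
  obtains x y z w where "{x, y} \<in> bd_faces K" "{x, z} \<in> bd_faces K" "{y, w} \<in> bd_faces K"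
    "x \<noteq> y" "x \<noteq> z" "y \<noteq> z" "{x, y} \<noteq> {x, z}" "{x, y} \<noteq> {y, w}" "{x, z} \<noteq> {y, w}"
proof -
  obtain e0 where e0: "e0 \<in> bd_faces K" using ne by blast
  then obtain x y where xy: "e0 = {x, y}" "x \<noteq> y" using edge_eq_pair bd_faces_subset_E by blast
  then have xy_bd: "{x, y} \<in> bd_faces K" "{y, x} \<in> bd_faces K"
    using e0 by (simp_all add: insert_commute)
  obtain z where z: "{x, z} \<in> bd_faces K" "z \<noteq> y" "z \<noteq> x"
    using bd_faces_other_edge[OF K xy_bd(1)] by blast
  obtain w where w: "{y, w} \<in> bd_faces K" "w \<noteq> x" "w \<noteq> y"
    using bd_faces_other_edge[OF K xy_bd(2)] by blast
  have "{x, y} \<noteq> {x, z}" "{x, y} \<noteq> {y, w}" "{x, z} \<noteq> {y, w}"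
    using xy(2) z(2,3) w(2,3) by (auto simp: doubleton_eq_iff)
  then show ?thesis using that xy_bd(1) z w xy(2) by blast
qed

lemma bd_faces_triangle:
  assumes K: "K \<subseteq> F" and ne: "bd_faces K \<noteq> {}" and le3: "card (bd_faces K) \<le> 3"
  obtains x y z where "x \<noteq> y" "x \<noteq> z" "y \<noteq> z" "bd_faces K = {{x, y}, {x, z}, {y, z}}"
proof -
  obtain x y z w where xyzw: "{x, y} \<in> bd_faces K" "{x, z} \<in> bd_faces K" "{y, w} \<in> bd_faces K"
    "x \<noteq> y" "x \<noteq> z" "y \<noteq> z" "{x, y} \<noteq> {x, z}" "{x, y} \<noteq> {y, w}" "{x, z} \<noteq> {y, w}"
    by (rule bd_faces_three_edges[OF K ne])
  have "{{x, y}, {x, z}, {y, w}} \<subseteq> bd_faces K" using xyzw(1-3) by simp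
  moreover have "card (bd_faces K) \<le> card {{x, y}, {x, z}, {y, w}}" using le3 xyzw(7-9) by simp
  ultimately have B: "{{x, y}, {x, z}, {y, w}} = bd_faces K" by (rule card_seteq[OF finite_bd_faces])
  have "{z, x} \<in> bd_faces K" using xyzw(2) by (simp add: insert_commute)
  then obtain t where t: "{z, t} \<in> bd_faces K" "t \<noteq> x" "t \<noteq> z"
    using bd_faces_other_edge[OF K] by blast
  have "{z, t} \<in> {{x, y}, {x, z}, {y, w}}" using t(1) B by simp
  moreover have "{z, t} \<noteq> {x, y}" using xyzw(5,6) by (auto simp: doubleton_eq_iff)
  moreover have "{z, t} \<noteq> {x, z}" using t(2,3) by (auto simp: doubleton_eq_iff)
  ultimately have "{z, t} = {y, w}" by simp
  then have "w = z" using xyzw(6) by (auto simp: doubleton_eq_iff)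
  then show ?thesis using B by (intro that[OF xyzw(4-6)]) simp
qed
end

locale near_tri_no_ear = near_tri +
  assumes apex_outer: "{u, w} \<in> OE \<Longrightarrow> {v, u, w} \<in> F \<Longrightarrow> v \<in> OV"
begin

lemma outer_face_apex:
  assumes xa: "{x, a} \<in> OE" and g: "g \<in> F" "{x, a} \<subseteq> g"
  shows "\<exists>z. g = {x, a, z} \<and> z \<noteq> x \<and> z \<noteq> a \<and> z \<in> OV"
proof -
  have "x \<noteq> a" using edgeD[OF outer_edge_in_E[OF xa]] by auto
  obtain p q where pq: "g = {x, p, q}" "x \<noteq> p" "x \<noteq> q" "p \<noteq> q"
    using face_eq_triple[OF g(1)] g(2) by blast
  define z where "z = (if a = p then q else p)"
  have "a = p \<or> a = q" using g(2) pq(1) \<open>x \<noteq> a\<close> by auto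
  then have z: "g = {x, a, z}" "z \<noteq> x" "z \<noteq> a" using pq unfolding z_def by auto
  moreover have "{z, x, a} \<in> F" using g(1) z(1) by (simp add: insert_commute)
  ultimately show ?thesis using apex_outer[OF xa] by blast
qed

text \<open>No boundary edge of \<open>W\<close> other than \<open>{a, z}\<close> is inner, so the faces at \<open>x\<close> all lie
  outside \<open>W\<close>, like \<open>g\<close>; then \<open>W - Z\<close> has no inner boundary edge at all and must be empty.\<close>
lemma chord_side_subset:
  assumes Z: "Z \<subseteq> F" "bd_faces Z - OE = {{x, y}}"
    and W: "W \<subseteq> F" "bd_faces W - OE = {{a, z}}"
    and g: "g \<in> Z" "g \<notin> W" "{a, z} \<subseteq> g" "x \<in> g" and x: "x \<noteq> a" "x \<noteq> z"
  shows "W \<subseteq> Z"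
proof -
  have gF: "g \<in> F" using g(1) Z(1) by blast
  have "{a, z} \<notin> bd_faces Z"
  proof
    assume "{a, z} \<in> bd_faces Z"
    then have "{a, z} = {x, y}" using single_inner_bd_edge[OF Z(2)] W(2) by blast
    then show False using x by (simp add: doubleton_eq_iff)
  qed
  have x_out: "h \<notin> W" if "h \<in> F" "x \<in> h" for h
  proof -
    have "x \<in> V" "x \<notin> {a, z}" using faceD[OF gF] g(4) x by auto
    then show ?thesis using faces_at_vertex_off_chord[OF W(1,2) _ _ that gF g(4)] g(2) by blast
  qed
  have "W - Z = {}"
  proof (rule uncrossed_face_set_empty[where f = g])
    show "W - Z \<subseteq> F" "g \<in> F" "g \<notin> W - Z" using W(1) gF g(1) by blast+
  next
    fix e h1 h2
    assume eE: "e \<in> E" and eO: "e \<notin> OE" and h: "edge_faces e = {h1, h2}" "h1 \<noteq> h2"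
      and h1: "h1 \<in> W - Z" and h2: "h2 \<notin> W - Z"
    show False
    proof (cases "h2 \<in> W")
      case False
      then have "e \<in> bd_faces W" using mem_bd_faces_iff[OF W(1) h eE] h1 by simp
      then have "e = {a, z}" using single_inner_bd_edge[OF W(2) _ eO] by blast
      then have "e \<notin> bd_faces Z" using \<open>{a, z} \<notin> bd_faces Z\<close> by simp
      then have "h2 \<notin> Z" using mem_bd_faces_iff[OF Z(1) h eE] h1 by simp
      moreover have "g \<in> edge_faces e" using gF g(3) \<open>e = {a, z}\<close> unfolding edge_faces_def by simp
      then have "g = h2" using h(1) h1 g(2) by auto
      ultimately show False using g(1) by simp
    next
      case True
      then have "e \<in> bd_faces Z" using mem_bd_faces_iff[OF Z(1) h eE] h1 h2 by simp
      then have "e = {x, y}" using single_inner_bd_edge[OF Z(2) _ eO] by blast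
      then have "h1 \<in> F" "x \<in> h1" using h(1) unfolding edge_faces_def by auto
      then show False using x_out h1 by blast
    qed
  qed
  then show "W \<subseteq> Z" by blast
qed

text \<open>At an end \<open>x\<close> of the chord, \<open>Z\<close> has an outer boundary edge
  \<open>{x, a}\<close> whose face \<open>{x, a, z}\<close> lies in \<open>Z\<close>, with \<open>z\<close> outer.  If \<open>{a, z}\<close> is outer then
  \<open>a\<close> is an ear; otherwise the side of the chord \<open>{a, z}\<close> away from that face is a smaller set
  bounded by one chord inside \<open>Z\<close>.\<close>
lemma ears_nonempty:
  assumes "Z \<subseteq> F" "bd_faces Z - OE = {e}"
  shows "ears Z \<noteq> {}"
  using assms
proof (induction "card Z" arbitrary: Z e rule: less_induct)
  case less
  note Z = less.prems(1) and bZ = less.prems(2)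
  have "e \<in> E" using bZ bd_faces_subset_E by blast
  then obtain x y where xy: "e = {x, y}" "x \<noteq> y" using edge_eq_pair by blast
  have xy_bd: "{x, y} \<in> bd_faces Z" using bZ unfolding xy(1) by blast
  obtain a where a: "{x, a} \<in> bd_faces Z" "a \<noteq> y" "a \<noteq> x"
    using bd_faces_other_edge[OF Z xy_bd] by blast
  have xa_O: "{x, a} \<in> OE"
  proof (rule ccontr)
    assume "{x, a} \<notin> OE"
    then have "{x, a} = {x, y}" using single_inner_bd_edge[OF bZ a(1)] xy(1) by simp
    then show False using a(2,3) by (simp add: doubleton_eq_iff)
  qed
  obtain g where g: "g \<in> F" "{x, a} \<subseteq> g"
    using edge_faces_nonempty[OF outer_edge_in_E[OF xa_O]] unfolding edge_faces_def by blast
  have gZ: "g \<in> Z" using outer_edge_face_in_bd[OF Z a(1) xa_O g] .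
  obtain z where z: "g = {x, a, z}" "z \<noteq> x" "z \<noteq> a" "z \<in> OV"
    using outer_face_apex[OF xa_O g] by blast
  have aOV: "a \<in> OV" using outer_edge_vertices[OF xa_O] by blast
  have azE: "{a, z} \<in> E" using face_pair_edge[OF g(1), of a z] z by simp
  show "ears Z \<noteq> {}"
  proof (cases "{a, z} \<in> OE")
    case True
    have "{a, x} \<in> OE" "{a, x, z} \<in> F" using xa_O g(1) z(1) by (simp_all add: insert_commute)
    from outer_vertex_of_degree_two[OF this(1) True _ this(2)] z(2)
    have "gdeg E a = 2" "\<forall>h\<in>F. a \<in> h \<longrightarrow> h = g" using z(1) by (auto simp: insert_commute)
    then have "a \<in> ears Z" using aOV gZ unfolding ears_def by auto
    then show ?thesis by blast
  next
    case False
    obtain W where W: "W \<subseteq> F" "bd_faces W - OE = {{a, z}}" "g \<notin> W"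
      using chord_side[OF aOV z(4) azE False g(1)] by blast
    have "W \<subseteq> Z"
      using chord_side_subset[OF Z bZ[unfolded xy(1)] W(1,2) gZ W(3)] z(1-3) a(3) by auto
    then have "W \<subset> Z" using gZ W(3) by blast
    then have "card W < card Z" using finite_subset[OF Z finite_F] by (intro psubset_card_mono)
    then have "ears W \<noteq> {}" using less.hyps W(1,2) by blast
    then show ?thesis using ears_mono[OF \<open>W \<subseteq> Z\<close>] by blast
  qed
qed

section \<open>Components of the faces with an inner vertex\<close>

definition inner_faces :: "'a set set" where
  "inner_faces = {f\<in>F. \<exists>v\<in>f. v \<notin> OV}"

definition adjacent :: "'a set \<Rightarrow> 'a set \<Rightarrow> bool" where
  "adjacent f f' \<longleftrightarrow> (\<exists>e\<in>E. e \<subseteq> f \<and> e \<subseteq> f')"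

definition closed_inner :: "'a set set \<Rightarrow> bool" where
  "closed_inner K \<longleftrightarrow> K \<subseteq> inner_faces \<and> (\<forall>f\<in>K. \<forall>f'\<in>inner_faces. adjacent f f' \<longrightarrow> f' \<in> K)"

definition component :: "'a set set \<Rightarrow> bool" where
  "component K \<longleftrightarrow> closed_inner K \<and> K \<noteq> {} \<and>
     (\<forall>K'. closed_inner K' \<longrightarrow> K' \<noteq> {} \<longrightarrow> K' \<subseteq> K \<longrightarrow> K' = K)"

definition attached :: "'a set" where
  "attached = {x\<in>OV. \<exists>y\<in>V - OV. {x, y} \<in> E}"

definition deg2_outer :: "'a set" where
  "deg2_outer = {x\<in>OV. gdeg E x = 2}"

lemma closed_inner_subset_F: "closed_inner K \<Longrightarrow> K \<subseteq> F"
  unfolding closed_inner_def inner_faces_def by blast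

lemma component_closed_inner: "component K \<Longrightarrow> closed_inner K"
  unfolding component_def by blast

lemma component_subset_F: "component K \<Longrightarrow> K \<subseteq> F"
  using closed_inner_subset_F component_closed_inner by blast

lemma component_subset_inner_faces: "component K \<Longrightarrow> K \<subseteq> inner_faces"
  unfolding component_def closed_inner_def by blast

lemma component_nonempty: "component K \<Longrightarrow> K \<noteq> {}"
  unfolding component_def by blast

lemma component_exists:
  assumes "closed_inner K0" "K0 \<noteq> {}"
  shows "\<exists>K\<subseteq>K0. component K"
proof -
  have "finite K0" using closed_inner_subset_F[OF assms(1)] finite_F by (rule finite_subset)
  then show ?thesis using assms
  proof (induction K0 rule: finite_psubset_induct)
    case (psubset K0)
    show ?case
    proof (cases "component K0")
      case False
      then obtain K' where K': "closed_inner K'" "K' \<noteq> {}" "K' \<subset> K0"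
        using psubset.prems unfolding component_def by blast
      then obtain K where "K \<subseteq> K'" "component K" using psubset.IH by blast
      then show ?thesis using K'(3) by blast
    qed blast
  qed
qed

lemma closed_inner_inner_faces: "closed_inner inner_faces"
  unfolding closed_inner_def by blast

lemma closed_inner_diff:
  assumes "closed_inner K"
  shows "closed_inner (inner_faces - K)"
  using assms unfolding closed_inner_def adjacent_def by blast

lemma outer_face_not_inner:
  assumes "e \<in> OE" "f \<in> F" "e \<subseteq> f"
  shows "f \<notin> inner_faces"
proof -
  obtain x a where xa: "e = {x, a}" using edge_eq_pair[of e] outer_edge_in_E[OF assms(1)] by blast
  then have "{x, a} \<in> OE" "{x, a} \<subseteq> f" using assms(1,3) by simp_all
  then obtain z where "f = {x, a, z}" "z \<in> OV" using outer_face_apex assms(2) by blast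
  moreover have "x \<in> OV" "a \<in> OV" using outer_edge_vertices[OF \<open>{x, a} \<in> OE\<close>] by simp_all
  ultimately show ?thesis unfolding inner_faces_def by auto
qed

lemma bd_closed_inner_not_outer:
  assumes "closed_inner K" "e \<in> bd_faces K"
  shows "e \<notin> OE"
proof
  assume eO: "e \<in> OE"
  obtain f where f: "f \<in> F" "e \<subseteq> f"
    using edge_faces_nonempty[OF outer_edge_in_E[OF eO]] unfolding edge_faces_def by blast
  then have "f \<in> K" using outer_edge_face_in_bd[OF closed_inner_subset_F[OF assms(1)] assms(2) eO] by blast
  then show False using outer_face_not_inner[OF eO f] assms(1) unfolding closed_inner_def by blast
qed

lemma bd_closed_inner_faces:
  assumes K: "closed_inner K" and e: "e \<in> bd_faces K"
  shows "\<exists>k f. edge_faces e = {k, f} \<and> k \<noteq> f \<and> k \<in> K \<and> f \<in> F \<and> f \<notin> inner_faces"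
proof -
  obtain k f where kf: "edge_faces e = {k, f}" "k \<noteq> f" "k \<in> K" "f \<notin> K"
    using bd_inner_edge_faces[OF closed_inner_subset_F[OF K] e bd_closed_inner_not_outer[OF K e]]
    by blast
  have "e \<in> E" using e bd_faces_subset_E by blast
  moreover have "e \<subseteq> k" "e \<subseteq> f" "f \<in> F" using kf(1) unfolding edge_faces_def by auto
  ultimately have "adjacent k f" unfolding adjacent_def by blast
  then have "f \<notin> inner_faces" using K kf(3,4) unfolding closed_inner_def by blast
  then show ?thesis using kf \<open>f \<in> F\<close> by blast
qed

lemma bd_closed_inner_attached:
  assumes K: "closed_inner K" and e: "e \<in> bd_faces K"
  shows "e \<subseteq> attached"
proof
  fix x assume x: "x \<in> e"
  obtain k f where kf: "edge_faces e = {k, f}" "k \<in> K" "f \<in> F" "f \<notin> inner_faces"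
    using bd_closed_inner_faces[OF K e] by blast
  have "e \<subseteq> k" "e \<subseteq> f" "k \<in> F" using kf(1) unfolding edge_faces_def by auto
  then have xOV: "x \<in> OV" using x kf(3,4) unfolding inner_faces_def by blast
  obtain v where v: "v \<in> k" "v \<notin> OV" using kf(2) K unfolding closed_inner_def inner_faces_def by blast
  have "x \<in> k" using x \<open>e \<subseteq> k\<close> by blast
  moreover have "v \<noteq> x" using v(2) xOV by blast
  ultimately have "{x, v} \<in> E" using face_pair_edge[OF \<open>k \<in> F\<close> _ v(1)] by blast
  moreover have "v \<in> V" using faceD[OF \<open>k \<in> F\<close>] v(1) by blast
  ultimately show "x \<in> attached" unfolding attached_def using xOV v(2) by blast
qed

lemma adjacent_across_bd:
  assumes Z: "Z \<subseteq> F" and f: "f \<in> Z" and f': "f' \<in> F" "f' \<notin> Z" and adj: "adjacent f f'"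
  shows "\<exists>e. e \<in> bd_faces Z \<and> e \<notin> OE \<and> edge_faces e = {f, f'}"
proof -
  obtain e where e: "e \<in> E" "e \<subseteq> f" "e \<subseteq> f'" using adj unfolding adjacent_def by blast
  have "f \<noteq> f'" using f f' by blast
  have "f \<in> edge_faces e" "f' \<in> edge_faces e" using e f f' Z unfolding edge_faces_def by auto
  then have fe: "edge_faces e = {f, f'}" "e \<notin> OE" using edge_faces_eq_pair[OF e(1)] \<open>f \<noteq> f'\<close> by blast+
  have "e \<in> bd_faces Z" using mem_bd_faces_iff[OF Z fe(1) \<open>f \<noteq> f'\<close> e(1)] f f'(2) by simp
  then show ?thesis using fe by blast
qed

text \<open>Both \<open>K \<inter> Z\<close> and \<open>K - Z\<close> are closed: a face of one adjacent to a face of the other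
  would cross the boundary of \<open>Z\<close> at an inner edge, hence at \<open>e\<close>, whose face \<open>ob\<close> is not
  inner.\<close>
lemma component_inside_or_outside:
  assumes K: "component K" and Z: "Z \<subseteq> F" and bZ: "bd_faces Z - OE \<subseteq> {e}"
    and ob: "ob \<in> edge_faces e" "ob \<notin> inner_faces"
  shows "K \<subseteq> Z \<or> K \<inter> Z = {}"
proof -
  have cK: "closed_inner K" and KR: "K \<subseteq> inner_faces"
    using component_closed_inner[OF K] component_subset_inner_faces[OF K] by blast+
  have no_cross: False
    if X: "X \<subseteq> F" "bd_faces X - OE \<subseteq> {e}" "f \<in> X" "f \<in> K" "f' \<in> inner_faces" "f' \<notin> X" "adjacent f f'"
    for X f f'
  proof -
    have "f' \<in> F" using X(5) unfolding inner_faces_def by blast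
    then obtain e' where e': "e' \<in> bd_faces X" "e' \<notin> OE" "edge_faces e' = {f, f'}"
      using adjacent_across_bd[OF X(1,3) _ X(6,7)] by blast
    then have "e' = e" using X(2) by blast
    then have "ob = f \<or> ob = f'" using ob(1) e'(3) by simp
    then show False using ob(2) X(4,5) KR by blast
  qed
  have "closed_inner (K \<inter> Z)" unfolding closed_inner_def
  proof (intro conjI ballI impI)
    fix f f' assume f: "f \<in> K \<inter> Z" and f': "f' \<in> inner_faces" and adj: "adjacent f f'"
    have "f' \<in> K" using cK f f' adj unfolding closed_inner_def by blast
    moreover have "f' \<in> Z" using no_cross[OF Z bZ _ _ f' _ adj] f by blast
    ultimately show "f' \<in> K \<inter> Z" by blast
  qed (use KR in blast)
  moreover have "closed_inner (K - Z)" unfolding closed_inner_def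
  proof (intro conjI ballI impI)
    fix f f' assume f: "f \<in> K - Z" and f': "f' \<in> inner_faces" and adj: "adjacent f f'"
    have "f' \<in> K" using cK f f' adj unfolding closed_inner_def by blast
    moreover have "adjacent f' f" using adj unfolding adjacent_def by blast
    then have "f' \<notin> Z" using no_cross[OF Z bZ _ \<open>f' \<in> K\<close>, of f] f KR by blast
    ultimately show "f' \<in> K - Z" by blast
  qed (use KR in blast)
  ultimately show ?thesis using K unfolding component_def by blast
qed

text \<open>For a boundary edge \<open>e\<close> of a component \<open>K\<close>, the side of the chord \<open>e\<close> away from \<open>K\<close>;
  the choice is only meaningful under the hypotheses of lemma \<open>beyond\<close>.\<close>
definition beyond :: "'a set set \<Rightarrow> 'a set \<Rightarrow> 'a set set" where
  "beyond K e = (SOME Z. Z \<subseteq> F \<and> bd_faces Z - OE = {e} \<and> K \<inter> Z = {})"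

lemma beyond:
  assumes K: "component K" and e: "e \<in> bd_faces K"
  shows "beyond K e \<subseteq> F" "bd_faces (beyond K e) - OE = {e}" "K \<inter> beyond K e = {}"
proof -
  have cK: "closed_inner K" using component_closed_inner[OF K] .
  obtain k f where kf: "edge_faces e = {k, f}" "k \<in> K" "f \<notin> inner_faces"
    using bd_closed_inner_faces[OF cK e] by blast
  have "e \<in> E" using e bd_faces_subset_E by blast
  then obtain x y where xy: "e = {x, y}" using edge_eq_pair by blast
  have "{x, y} \<subseteq> attached" using bd_closed_inner_attached[OF cK e] unfolding xy .
  then have "x \<in> OV" "y \<in> OV" unfolding attached_def by blast+
  moreover have "{x, y} \<in> E" "{x, y} \<notin> OE"
    using \<open>e \<in> E\<close> bd_closed_inner_not_outer[OF cK e] unfolding xy by simp_all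
  moreover have "k \<in> F" using kf(2) component_subset_F[OF K] by blast
  ultimately obtain W where W: "W \<subseteq> F" "bd_faces W - OE = {e}" "k \<notin> W"
    unfolding xy by (rule chord_side[THEN exE]) blast
  have "f \<in> edge_faces e" using kf(1) by simp
  then have "K \<subseteq> W \<or> K \<inter> W = {}"
    using component_inside_or_outside[OF K W(1) equalityD1[OF W(2)] _ kf(3)] by blast
  then have "K \<inter> W = {}" using kf(2) W(3) by blast
  then have "\<exists>Z. Z \<subseteq> F \<and> bd_faces Z - OE = {e} \<and> K \<inter> Z = {}" using W(1,2) by blast
  then have "beyond K e \<subseteq> F \<and> bd_faces (beyond K e) - OE = {e} \<and> K \<inter> beyond K e = {}"
    unfolding beyond_def by (rule someI_ex)
  then show "beyond K e \<subseteq> F" "bd_faces (beyond K e) - OE = {e}" "K \<inter> beyond K e = {}"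
    by blast+
qed

lemma beyond_faces:
  assumes K: "component K" and e: "e \<in> bd_faces K"
  obtains k f where "edge_faces e = {k, f}" "k \<noteq> f" "k \<in> K" "f \<in> beyond K e" "f \<notin> inner_faces"
proof -
  obtain k f where kf: "edge_faces e = {k, f}" "k \<noteq> f" "k \<in> K" "f \<notin> inner_faces"
    using bd_closed_inner_faces[OF component_closed_inner[OF K] e] by blast
  have "k \<notin> beyond K e" using beyond(3)[OF K e] kf(3) by blast
  moreover have "e \<in> bd_faces (beyond K e)" using beyond(2)[OF K e] by blast
  moreover have "e \<in> E" using e bd_faces_subset_E by blast
  ultimately have "f \<in> beyond K e" using mem_bd_faces_iff[OF beyond(1)[OF K e] kf(1,2)] by simp
  then show ?thesis using that kf by blast
qed

lemma crossing_into_beyond: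
  assumes K: "component K" "e \<in> bd_faces K"
    and d: "d \<in> E" "d \<notin> OE" "edge_faces d = {h1, h2}" "h1 \<noteq> h2"
    and h: "h1 \<notin> beyond K e" "h2 \<in> beyond K e"
  shows "d = e" "h1 \<in> K"
proof -
  have "d \<in> bd_faces (beyond K e)" using mem_bd_faces_iff[OF beyond(1)[OF K] d(3,4,1)] h by simp
  then show "d = e" using single_inner_bd_edge[OF beyond(2)[OF K] _ d(2)] by blast
  obtain k f where kf: "edge_faces e = {k, f}" "k \<noteq> f" "k \<in> K" "f \<in> beyond K e"
    "f \<notin> inner_faces"
    by (rule beyond_faces[OF K])
  have "h1 \<in> {k, f}" using d(3) kf(1) \<open>d = e\<close> by auto
  then show "h1 \<in> K" using kf(3,4) h(1) by auto
qed

lemma ears_beyond_nonempty: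
  assumes "component K" "e \<in> bd_faces K"
  shows "ears (beyond K e) \<noteq> {}"
  by (rule ears_nonempty[OF beyond(1,2)[OF assms]])

text \<open>An inner edge leaving the overlap of two sides would have to be the chord of both.\<close>
lemma beyond_disjoint:
  assumes K: "component K" and e1: "e1 \<in> bd_faces K" and e2: "e2 \<in> bd_faces K" and ne: "e1 \<noteq> e2"
  shows "beyond K e1 \<inter> beyond K e2 = {}"
proof -
  have cross: False
    if e': "e' \<in> bd_faces K" and e'': "e'' \<in> bd_faces K" "e' \<noteq> e''"
      and d: "d \<in> E" "d \<notin> OE" "edge_faces d = {h1, h2}" "h1 \<noteq> h2"
      and h: "h1 \<in> beyond K e'" "h1 \<in> beyond K e''" "h2 \<notin> beyond K e'"
    for e' e'' d h1 h2
  proof -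
    have d': "edge_faces d = {h2, h1}" "h2 \<noteq> h1" using d(3,4) by (auto simp: insert_commute)
    have "d = e'" "h2 \<in> K" using crossing_into_beyond[OF K e' d(1,2) d' h(3,1)] by auto
    then have "h2 \<notin> beyond K e''" using beyond(3)[OF K e''(1)] by blast
    then have "d = e''" using crossing_into_beyond(1)[OF K e''(1) d(1,2) d' _ h(2)] by blast
    then show False using \<open>d = e'\<close> e''(2) by simp
  qed
  obtain k where "k \<in> K" using component_nonempty[OF K] by blast
  then have k: "k \<in> F" "k \<notin> beyond K e1 \<inter> beyond K e2"
    using component_subset_F[OF K] beyond(3)[OF K e1] by blast+
  show ?thesis
  proof (rule uncrossed_face_set_empty[OF _ k])
    show "beyond K e1 \<inter> beyond K e2 \<subseteq> F" using beyond(1)[OF K e1] by blast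
  next
    fix d h1 h2
    assume d: "d \<in> E" "d \<notin> OE" "edge_faces d = {h1, h2}" "h1 \<noteq> h2"
      and h1: "h1 \<in> beyond K e1 \<inter> beyond K e2" and h2: "h2 \<notin> beyond K e1 \<inter> beyond K e2"
    show False
    proof (cases "h2 \<in> beyond K e1")
      case False
      then show False using cross[OF e1 e2 ne d] h1 by blast
    next
      case True
      then have "h2 \<notin> beyond K e2" using h2 by blast
      then show False using cross[OF e2 e1 ne[symmetric] d] h1 by blast
    qed
  qed
qed

text \<open>An inner edge leaving \<open>beyond K' e' - beyond K e\<close> would enter \<open>beyond K e\<close>, directly or
  through \<open>K'\<close>, and so would come from \<open>K\<close>; but \<open>K\<close> misses \<open>beyond K' e'\<close>.\<close>
lemma beyond_nested:
  assumes K: "component K" "e \<in> bd_faces K" and K': "component K'" "e' \<in> bd_faces K'"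
    and K'_in: "K' \<subseteq> beyond K e" and K_out: "K \<inter> beyond K' e' = {}"
  shows "beyond K' e' \<subseteq> beyond K e"
proof -
  obtain k where "k \<in> K" using component_nonempty[OF K(1)] by blast
  then have k: "k \<in> F" "k \<notin> beyond K' e' - beyond K e"
    using K_out component_subset_F[OF K(1)] by blast+
  have "beyond K' e' - beyond K e = {}"
  proof (rule uncrossed_face_set_empty[OF _ k])
    show "beyond K' e' - beyond K e \<subseteq> F" using beyond(1)[OF K'] by blast
  next
    fix d h1 h2
    assume d: "d \<in> E" "d \<notin> OE" "edge_faces d = {h1, h2}" "h1 \<noteq> h2"
      and h1: "h1 \<in> beyond K' e' - beyond K e" and h2: "h2 \<notin> beyond K' e' - beyond K e"
    have "h2 \<in> beyond K e"
    proof (cases "h2 \<in> beyond K' e'")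
      case False
      have d': "edge_faces d = {h2, h1}" "h2 \<noteq> h1" using d(3,4) by (auto simp: insert_commute)
      have "h2 \<in> K'" using crossing_into_beyond(2)[OF K' d(1,2) d' False] h1 by blast
      then show ?thesis using K'_in by blast
    qed (use h2 in blast)
    then have "h1 \<in> K" using crossing_into_beyond(2)[OF K d] h1 by blast
    then show False using h1 K_out by blast
  qed
  then show ?thesis by blast
qed

lemma bd_component_nonempty:
  assumes K: "component K"
  shows "bd_faces K \<noteq> {}"
proof
  assume "bd_faces K = {}"
  then have "K = {} \<or> K = F" using bd_faces_subset_OE[OF component_subset_F[OF K]] by simp
  then have "K = F" using component_nonempty[OF K] by blast
  obtain e where e: "e \<in> OE" using OE_nonempty by blast
  then obtain f where f: "f \<in> F" "e \<subseteq> f"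
    using edge_faces_nonempty[OF outer_edge_in_E] unfolding edge_faces_def by blast
  then show False
    using outer_face_not_inner[OF e f] component_subset_inner_faces[OF K] \<open>K = F\<close> by blast
qed

lemma component_beyond_dichotomy:
  assumes K: "component K" and K': "component K'" and d: "d \<in> bd_faces K'"
  shows "K \<subseteq> beyond K' d \<or> K \<inter> beyond K' d = {}"
proof -
  obtain k ob where kob: "edge_faces d = {k, ob}" "k \<noteq> ob" "k \<in> K'" "ob \<in> beyond K' d"
    "ob \<notin> inner_faces"
    by (rule beyond_faces[OF K' d])
  have "ob \<in> edge_faces d" using kob(1) by simp
  then show ?thesis
    by (rule component_inside_or_outside[OF K beyond(1)[OF K' d]
          equalityD1[OF beyond(2)[OF K' d]] _ kob(5)])
qed

lemma component_beyond_at_most_one: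
  assumes K: "component K" and K': "component K'"
    and e: "e \<in> bd_faces K'" "e' \<in> bd_faces K'" "e \<noteq> e'"
  shows "K \<inter> beyond K' e = {} \<or> K \<inter> beyond K' e' = {}"
  using component_beyond_dichotomy[OF K K'] beyond_disjoint[OF K' e] component_nonempty[OF K] e(1,2)
  by blast

text \<open>The component \<open>K'\<close> has three boundary edges with pairwise disjoint sides; \<open>K\<close> lies
  beyond at most one of them, and the other two sides lie inside \<open>beyond K e0\<close>, each with its
  own ear.\<close>
lemma two_ears_beyond:
  assumes K: "component K" "e0 \<in> bd_faces K" and K': "component K'"
    and K'_in: "K' \<subseteq> beyond K e0"
  shows "2 \<le> card (ears (beyond K e0))"
proof -
  note at_most_one = component_beyond_at_most_one[OF K(1) K']
  have two: "2 \<le> card (ears (beyond K e0))"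
    if e: "e \<in> bd_faces K'" "e' \<in> bd_faces K'" "e \<noteq> e'"
      and out: "K \<inter> beyond K' e = {}" "K \<inter> beyond K' e' = {}" for e e'
  proof -
    have sub: "beyond K' e \<subseteq> beyond K e0" "beyond K' e' \<subseteq> beyond K e0"
      using beyond_nested[OF K K' _ K'_in] e out by blast+
    obtain w w' where w: "w \<in> ears (beyond K' e)" "w' \<in> ears (beyond K' e')"
      using ears_beyond_nonempty[OF K'] e(1,2) by blast
    have "w \<noteq> w'" using ears_disjoint[OF beyond_disjoint[OF K' e]] w by blast
    moreover have "{w, w'} \<subseteq> ears (beyond K e0)"
      using w ears_mono[OF sub(1)] ears_mono[OF sub(2)] by blast
    then have "card {w, w'} \<le> card (ears (beyond K e0))" by (rule card_mono[OF finite_ears])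
    ultimately show ?thesis by simp
  qed
  obtain x y z w where xyzw: "{x, y} \<in> bd_faces K'" "{x, z} \<in> bd_faces K'" "{y, w} \<in> bd_faces K'"
    "x \<noteq> y" "x \<noteq> z" "y \<noteq> z" "{x, y} \<noteq> {x, z}" "{x, y} \<noteq> {y, w}" "{x, z} \<noteq> {y, w}"
    by (rule bd_faces_three_edges[OF component_subset_F[OF K'] bd_component_nonempty[OF K']])
  show ?thesis
  proof (cases "K \<inter> beyond K' {x, y} = {}")
    case True
    then show ?thesis
      using at_most_one[OF xyzw(2,3,9)] two[OF xyzw(1,2,7) True] two[OF xyzw(1,3,8) True] by blast
  next
    case False
    then show ?thesis
      using at_most_one[OF xyzw(1,2,7)] at_most_one[OF xyzw(1,3,8)] two[OF xyzw(2,3,9)] by blast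
  qed
qed

lemma finite_deg2_outer: "finite deg2_outer"
proof -
  have "deg2_outer \<subseteq> V" unfolding deg2_outer_def using OV_subset_V by blast
  then show ?thesis by (rule finite_subset[OF _ finite_V])
qed

lemma sum_card_ears_beyond_le:
  assumes K: "component K"
  shows "(\<Sum>e\<in>bd_faces K. card (ears (beyond K e))) \<le> card deg2_outer"
proof -
  have "(\<Sum>e\<in>bd_faces K. card (ears (beyond K e))) = card (\<Union>e\<in>bd_faces K. ears (beyond K e))"
    using finite_bd_faces finite_ears ears_disjoint[OF beyond_disjoint[OF K]]
    by (intro card_UN_disjoint[symmetric]) auto
  also have "\<dots> \<le> card deg2_outer"
    by (rule card_mono[OF finite_deg2_outer]) (auto simp: ears_def deg2_outer_def)
  finally show ?thesis .
qed

lemma card_bd_component_le: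
  assumes K: "component K"
  shows "card (bd_faces K) \<le> card deg2_outer"
proof -
  have "card (bd_faces K) = (\<Sum>e\<in>bd_faces K. 1)" by simp
  also have "\<dots> \<le> (\<Sum>e\<in>bd_faces K. card (ears (beyond K e)))"
    using ears_beyond_nonempty[OF K] finite_ears
    by (intro sum_mono) (simp add: Suc_leI card_gt_0_iff)
  also have "\<dots> \<le> card deg2_outer" by (rule sum_card_ears_beyond_le[OF K])
  finally show ?thesis .
qed

lemma card_bd_component_less:
  assumes K: "component K" and e0: "e0 \<in> bd_faces K" and two: "2 \<le> card (ears (beyond K e0))"
  shows "card (bd_faces K) < card deg2_outer"
proof -
  have "card (bd_faces K) = (\<Sum>e\<in>bd_faces K. 1)" by simp
  also have "\<dots> < (\<Sum>e\<in>bd_faces K. card (ears (beyond K e)))"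
  proof (rule sum_strict_mono_ex1[OF finite_bd_faces])
    show "\<forall>e\<in>bd_faces K. 1 \<le> card (ears (beyond K e))"
      using ears_beyond_nonempty[OF K] finite_ears by (simp add: Suc_leI card_gt_0_iff)
    show "\<exists>e\<in>bd_faces K. 1 < card (ears (beyond K e))" using e0 two by force
  qed
  also have "\<dots> \<le> card deg2_outer" by (rule sum_card_ears_beyond_le[OF K])
  finally show ?thesis .
qed

lemma faces_covered:
  assumes K: "component K"
  shows "F \<subseteq> K \<union> (\<Union>e\<in>bd_faces K. beyond K e)"
proof -
  define I where "I = F - K - (\<Union>e\<in>bd_faces K. beyond K e)"
  obtain k where "k \<in> K" using component_nonempty[OF K] by blast
  then have k: "k \<in> F" "k \<notin> I" using component_subset_F[OF K] unfolding I_def by blast+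
  have "I = {}"
  proof (rule uncrossed_face_set_empty[OF _ k])
    show "I \<subseteq> F" unfolding I_def by blast
  next
    fix d h1 h2
    assume d: "d \<in> E" "d \<notin> OE" "edge_faces d = {h1, h2}" "h1 \<noteq> h2"
      and "h1 \<in> I" and h2: "h2 \<notin> I"
    then have h1: "h1 \<notin> K" "\<And>e. e \<in> bd_faces K \<Longrightarrow> h1 \<notin> beyond K e" unfolding I_def by auto
    have "h2 \<in> F" using d(3) unfolding edge_faces_def by auto
    show False
    proof (cases "h2 \<in> K")
      case True
      then have dK: "d \<in> bd_faces K"
        using mem_bd_faces_iff[OF component_subset_F[OF K] d(3,4,1)] h1(1) by simp
      obtain k f where kf: "edge_faces d = {k, f}" "k \<noteq> f" "k \<in> K" "f \<in> beyond K d"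
        "f \<notin> inner_faces"
        by (rule beyond_faces[OF K dK])
      have "h1 \<in> {k, f}" using d(3) kf(1) by auto
      then show False using h1 kf(3,4) dK by blast
    next
      case False
      then obtain e where e: "e \<in> bd_faces K" "h2 \<in> beyond K e"
        using h2 \<open>h2 \<in> F\<close> unfolding I_def by blast
      show False using crossing_into_beyond(2)[OF K e(1) d h1(2)[OF e(1)] e(2)] h1(1) by blast
    qed
  qed
  then show ?thesis unfolding I_def by blast
qed

lemma vertex_on_bd_component:
  assumes K: "component K" and s: "s \<in> V" and h: "h \<in> K" "s \<in> h"
    and h': "h' \<in> F" "s \<in> h'" "h' \<notin> K"
  shows "\<exists>e\<in>bd_faces K. s \<in> e"
proof (rule ccontr)
  assume none: "\<not> (\<exists>e\<in>bd_faces K. s \<in> e)"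
  obtain e where e: "e \<in> bd_faces K" "h' \<in> beyond K e" using faces_covered[OF K] h' by blast
  have "s \<notin> e" "h \<in> F" using none e(1) h(1) component_subset_F[OF K] by blast+
  then have "h \<in> beyond K e"
    using faces_at_vertex_off_chord[OF beyond(1,2)[OF K e(1)] s _ _ h(2) h'(1,2)] e(2) by blast
  then show False using beyond(3)[OF K e(1)] h(1) by blast
qed

lemma outer_vertex_face_not_in_component:
  assumes K: "component K" and s: "s \<in> OV"
  obtains h where "h \<in> F" "s \<in> h" "h \<notin> K"
proof -
  obtain e where e: "e \<in> OE" "s \<in> e" using s OV_eq_Union_OE by blast
  then obtain h where h: "h \<in> F" "e \<subseteq> h"
    using edge_faces_nonempty[OF outer_edge_in_E] unfolding edge_faces_def by blast
  then have "h \<notin> K" using outer_face_not_inner[OF e(1) h] component_subset_inner_faces[OF K] by blast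
  then show ?thesis using that h e(2) by blast
qed

text \<open>Another component would lie beyond some boundary edge of \<open>K\<close> and give that side two
  ears, one more than the count allows.\<close>
lemma inner_faces_subset_component:
  assumes K: "component K" and tight: "card deg2_outer \<le> card (bd_faces K)"
  shows "inner_faces \<subseteq> K"
proof (rule ccontr)
  assume "\<not> inner_faces \<subseteq> K"
  then obtain K' where K': "K' \<subseteq> inner_faces - K" "component K'"
    using component_exists[OF closed_inner_diff[OF component_closed_inner[OF K]]] by blast
  obtain f' where f': "f' \<in> K'" using component_nonempty[OF K'(2)] by blast
  then have "f' \<in> F" "f' \<notin> K" using K'(1) unfolding inner_faces_def by blast+
  then obtain e where e: "e \<in> bd_faces K" "f' \<in> beyond K e" using faces_covered[OF K] by blast
  have "K' \<subseteq> beyond K e \<or> K' \<inter> beyond K e = {}"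
    by (rule component_beyond_dichotomy[OF K'(2) K e(1)])
  then have "K' \<subseteq> beyond K e" using f' e(2) by blast
  then have "2 \<le> card (ears (beyond K e))" by (rule two_ears_beyond[OF K e(1) K'(2)])
  then show False using card_bd_component_less[OF K e(1)] tight by simp
qed

lemma bd_component_vertices_attached:
  assumes K: "component K"
  shows "\<Union>(bd_faces K) \<subseteq> attached"
  using bd_closed_inner_attached[OF component_closed_inner[OF K]] by blast

lemma attached_subset_bd_component_vertices:
  assumes K: "component K" and all: "inner_faces \<subseteq> K"
  shows "attached \<subseteq> \<Union>(bd_faces K)"
proof
  fix s assume "s \<in> attached"
  then obtain v where v: "v \<in> V - OV" "{s, v} \<in> E" and s: "s \<in> OV" unfolding attached_def by blast
  obtain h where h: "h \<in> F" "{s, v} \<subseteq> h" using v(2) edge_iff[of "{s, v}"] by blast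
  then have "h \<in> K" using v(1) all unfolding inner_faces_def by blast
  moreover obtain h' where "h' \<in> F" "s \<in> h'" "h' \<notin> K"
    using outer_vertex_face_not_in_component[OF K s] by blast
  moreover have "s \<in> V" using s OV_subset_V by blast
  ultimately show "s \<in> \<Union>(bd_faces K)" using vertex_on_bd_component[OF K] h(2) by blast
qed

text \<open>Along a walk avoiding \<open>attached\<close>, every face at every vertex stays in \<open>K\<close>: a face outside
  \<open>K\<close> at a vertex with a face in \<open>K\<close> puts that vertex on the boundary of \<open>K\<close>.  But every outer
  vertex has a face with an outer edge, which is not in \<open>K\<close>.\<close>
lemma not_reach_avoiding_attached:
  assumes K: "component K" and all: "inner_faces \<subseteq> K" and v: "v \<in> V - OV" and z: "z \<in> OV"
  shows "\<not> reach_avoiding V E attached v z"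
proof
  assume "reach_avoiding V E attached v z"
  then have walk: "(v, z) \<in> (adj_rel (V - attached) E)\<^sup>*" unfolding reach_avoiding_def .
  have v_faces: "\<forall>h\<in>F. v \<in> h \<longrightarrow> h \<in> K" using v all unfolding inner_faces_def by blast
  have "\<forall>h\<in>F. z \<in> h \<longrightarrow> h \<in> K" using walk
  proof (induction rule: rtrancl_induct)
    case base
    show ?case using v_faces .
  next
    case (step u u')
    then have uu': "{u, u'} \<in> E" "u' \<in> V" "u' \<notin> attached" unfolding adj_rel_def by auto
    obtain h where h: "h \<in> F" "{u, u'} \<subseteq> h" using uu'(1) edge_iff[of "{u, u'}"] by blast
    then have "h \<in> K" using step.IH by blast
    show ?case
    proof (intro ballI impI, rule ccontr)
      fix h' assume "h' \<in> F" "u' \<in> h'" "h' \<notin> K"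
      then obtain e where "e \<in> bd_faces K" "u' \<in> e"
        using vertex_on_bd_component[OF K uu'(2) \<open>h \<in> K\<close>] h(2) by blast
      then show False using bd_component_vertices_attached[OF K] uu'(3) by blast
    qed
  qed
  moreover obtain h where "h \<in> F" "z \<in> h" "h \<notin> K" using outer_vertex_face_not_in_component[OF K z] by blast
  ultimately show False by blast
qed

lemma component_exists_if_inner_vertex:
  assumes "V - OV \<noteq> {}"
  obtains K where "component K"
proof -
  obtain v where v: "v \<in> V" "v \<notin> OV" using assms by blast
  then obtain f where "f \<in> F" "v \<in> f" using V_eq_Union_F by blast
  then have "f \<in> inner_faces" using v(2) unfolding inner_faces_def by blast
  then show ?thesis using component_exists[OF closed_inner_inner_faces] that by blast
qed

lemma finite_attached: "finite attached"
proof -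
  have "attached \<subseteq> V" unfolding attached_def using OV_subset_V by blast
  then show ?thesis by (rule finite_subset[OF _ finite_V])
qed

lemma three_le_card_bd_component:
  assumes K: "component K"
  shows "3 \<le> card (bd_faces K)" "3 \<le> card attached"
proof -
  obtain x y z w where xyzw: "{x, y} \<in> bd_faces K" "{x, z} \<in> bd_faces K" "{y, w} \<in> bd_faces K"
    "x \<noteq> y" "x \<noteq> z" "y \<noteq> z" "{x, y} \<noteq> {x, z}" "{x, y} \<noteq> {y, w}" "{x, z} \<noteq> {y, w}"
    by (rule bd_faces_three_edges[OF component_subset_F[OF K] bd_component_nonempty[OF K]])
  have "{{x, y}, {x, z}, {y, w}} \<subseteq> bd_faces K" using xyzw(1-3) by simp
  then have "card {{x, y}, {x, z}, {y, w}} \<le> card (bd_faces K)" by (rule card_mono[OF finite_bd_faces])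
  then show "3 \<le> card (bd_faces K)" using xyzw(7-9) by simp
  have "{x, y, z} \<subseteq> attached" using bd_component_vertices_attached[OF K] xyzw(1,2) by blast
  then have "card {x, y, z} \<le> card attached" by (rule card_mono[OF finite_attached])
  then show "3 \<le> card attached" using xyzw(4-6) by simp
qed

text \<open>With exactly three ears the count of \<open>card_bd_component_le\<close> is tight: the boundary of
  \<open>K\<close> is a triangle and \<open>K\<close> contains every face with an inner vertex.\<close>
lemma attached_triangle:
  assumes K: "component K" and three: "card deg2_outer = 3"
  shows "card attached = 3" "\<forall>x\<in>attached. \<forall>y\<in>attached. x \<noteq> y \<longrightarrow> {x, y} \<in> E"
    "\<forall>v\<in>V - OV. \<forall>z\<in>OV - attached. \<not> reach_avoiding V E attached v z"
proof -
  have "card (bd_faces K) = 3"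
    using three_le_card_bd_component(1)[OF K] card_bd_component_le[OF K] three by simp
  then obtain x y z where xyz: "x \<noteq> y" "x \<noteq> z" "y \<noteq> z" "bd_faces K = {{x, y}, {x, z}, {y, z}}"
    using bd_faces_triangle[OF component_subset_F[OF K] bd_component_nonempty[OF K]] by auto
  have all: "inner_faces \<subseteq> K"
    using inner_faces_subset_component[OF K] three \<open>card (bd_faces K) = 3\<close> by simp
  have "attached = \<Union>(bd_faces K)"
    using attached_subset_bd_component_vertices[OF K all] bd_component_vertices_attached[OF K] by blast
  then have att: "attached = {x, y, z}" using xyz(4) by auto
  then show "card attached = 3" using xyz(1-3) by simp
  have "{x, y} \<in> E" "{x, z} \<in> E" "{y, z} \<in> E" using xyz(4) bd_faces_subset_E by auto
  then show "\<forall>a\<in>attached. \<forall>b\<in>attached. a \<noteq> b \<longrightarrow> {a, b} \<in> E"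
    unfolding att by (auto simp: insert_commute)
  show "\<forall>v\<in>V - OV. \<forall>z\<in>OV - attached. \<not> reach_avoiding V E attached v z"
    using not_reach_avoiding_attached[OF K all] by blast
qed

end

theorem lemma2p7:
  fixes V :: "'a set" and E F :: "'a set set"
  assumes nt: "near_triangulation V E F"
    and inner: "V - outer_vertices E F \<noteq> {}"
    and no_ear: "\<not> (\<exists>v\<in>V - outer_vertices E F. \<exists>u w. {u, w} \<in> outer_edges E F \<and> {v, u, w} \<in> F)"
  defines "S \<equiv> {x\<in>outer_vertices E F. \<exists>y\<in>V - outer_vertices E F. {x, y} \<in> E}"
    and "D2 \<equiv> {x\<in>outer_vertices E F. gdeg E x = 2}"
  shows "card S \<ge> 3 \<and> card D2 \<ge> 3 \<and>
         (card D2 = 3 \<longrightarrow>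
            card S = 3 \<and> (\<forall>x\<in>S. \<forall>y\<in>S. x \<noteq> y \<longrightarrow> {x, y} \<in> E) \<and>
            (\<forall>v\<in>V - outer_vertices E F. \<forall>z\<in>outer_vertices E F - S.
                \<not> reach_avoiding V E S v z))"
proof -
  interpret near_tri V E F by (rule near_tri.intro[OF nt])
  interpret near_tri_no_ear V E F
  proof
    fix u w v assume "{u, w} \<in> outer_edges E F" "{v, u, w} \<in> F"
    moreover have "v \<in> V" using faceD[OF calculation(2)] by simp
    ultimately show "v \<in> outer_vertices E F" using no_ear by blast
  qed
  have S: "S = attached" and D2: "D2 = deg2_outer"
    unfolding S_def D2_def attached_def deg2_outer_def by simp_all
  obtain K where K: "component K" using component_exists_if_inner_vertex[OF inner] by blast
  show ?thesis
    unfolding S D2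
    using three_le_card_bd_component[OF K] card_bd_component_le[OF K] attached_triangle[OF K]
    by linarith
qed

end
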